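(* Let $H$ be a bialgebra, $\mathcal{A}$ an $H$-bimodule algebra, $\mathbb{A}$ an $H$-bicomodule algebra and $A$ an algebra in the Yetter–Drinfeld category ${}^H_H\mathcal{YD}$. Then: the generalized smash product $\mathcal{A}\blacktriangleright\!\!<A$ is an $H$-bimodule algebra with actions $h\cdot(\varphi\blacktriangleright\!\!<a)=h_1\cdot\varphi\blacktriangleright\!\!<h_2\cdot a$ and $(\varphi\blacktriangleright\!\!<a)\cdot h=\varphi\cdot h\blacktriangleright\!\!<a$; the generalized smash product $A\blacktriangleright\!\!<\mathbb{A}$ is an $H$-bicomodule algebra with coactions $\rho(a\blacktriangleright\!\!<u)=(a\blacktriangleright\!\!<u_{<0>})\otimes u_{<1>}$ and $\lambda(a\blacktriangleright\!\!<u)=a_{(-1)}u_{[-1]}\otimes(a_{(0)}\blacktriangleright\!\!<u_{[0]})$; and the identity map of $\mathcal{A}\otimes A\otimes\mathbb{A}$ is an algebra isomorphism $(\mathcal{A}\blacktriangleright\!\!<A)\natural\mathbb{A}\cong\mathcal{A}\natural(A\blacktriangleright\!\!<\mathbb{A})$.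
   Context: Work over a field $k$; $H$ an ordinary bialgebra, $\Delta(h)=h_1\otimes h_2$. An $H$-bimodule algebra is an associative unital algebra $\mathcal{A}$ which is an $H$-bimodule with $h\cdot(\varphi\psi)=(h_1\cdot\varphi)(h_2\cdot\psi)$, $(\varphi\psi)\cdot h=(\varphi\cdot h_1)(\psi\cdot h_2)$, $h\cdot1=1\cdot h=\varepsilon(h)1$. An $H$-bicomodule algebra is an associative unital algebra $\mathbb{A}$ with algebra maps $\lambda(u)=u_{[-1]}\otimes u_{[0]}$ (left $H$-coaction) and $\rho(u)=u_{<0>}\otimes u_{<1>}$ (right $H$-coaction) making $\mathbb{A}$ an $H$-bicomodule. An algebra $A$ in ${}^H_H\mathcal{YD}$ is a left $H$-module algebra (action $h\cdot a$) and left $H$-comodule algebra (coaction $a\mapsto a_{(-1)}\otimes a_{(0)}$) such that $h_1a_{(-1)}\otimes h_2\cdot a_{(0)}=(h_1\cdot a)_{(-1)}h_2\otimes(h_1\cdot a)_{(0)}$. For a left $H$-module algebra $M$ and a left $H$-comodule algebra $N$ (coaction $n\mapsto n_{\{-1\}}\otimes n_{\{0\}}$), the generalized smash product $M\blacktriangleright\!\!<N$ is $M\otimes N$ with product $(m\blacktriangleright\!\!<n)(m'\blacktriangleright\!\!<n')=m(n_{\{-1\}}\cdot m')\blacktriangleright\!\!<n_{\{0\}}n'$ (here $\mathcal{A}$ is viewed as a left $H$-module algebra via its left action). For an $H$-bimodule algebra $\mathcal{B}$ and $H$-bicomodule algebra $\mathbb{B}$, the L-R-smash product $\mathcal{B}\natural\mathbb{B}$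 is $\mathcal{B}\otimes\mathbb{B}$ with product $(\varphi\natural u)(\psi\natural u')=(\varphi\cdot u'_{<1>})(u_{[-1]}\cdot\psi)\natural u_{[0]}u'_{<0>}$. *)

theory Defs
  imports Main "HOL.Vector_Spaces"
begin

text \<open>Vector spaces over a field 'k presented as setoids: a carrier type with operations
 and an equivalence relation (equality for honest vector spaces, the tensor-product
 equivalence for formal sums of simple tensors).\<close>

record ('k,'x) svsp =
  vadd :: "'x \<Rightarrow> 'x \<Rightarrow> 'x"
  vzero :: 'x
  vsc :: "'k \<Rightarrow> 'x \<Rightarrow> 'x"
  veq :: "'x \<Rightarrow> 'x \<Rightarrow> bool"

definition vsum :: "('k,'x) svsp \<Rightarrow> 'x list \<Rightarrow> 'x" where
  "vsum X xs = foldr (vadd X) xs (vzero X)"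

definition plainvs :: "('k \<Rightarrow> 'x \<Rightarrow> 'x) \<Rightarrow> ('k,'x::ab_group_add) svsp" where
  "plainvs s = \<lparr>vadd = (+), vzero = 0, vsc = s, veq = (=)\<rparr>"

definition svs :: "('k::field,'x) svsp \<Rightarrow> bool" where
  "svs X \<longleftrightarrow> equivp (veq X) \<and>
    (\<forall>x x' y y'. veq X x x' \<longrightarrow> veq X y y' \<longrightarrow> veq X (vadd X x y) (vadd X x' y')) \<and>
    (\<forall>c x x'. veq X x x' \<longrightarrow> veq X (vsc X c x) (vsc X c x')) \<and>
    (\<forall>x y z. veq X (vadd X (vadd X x y) z) (vadd X x (vadd X y z))) \<and>
    (\<forall>x y. veq X (vadd X x y) (vadd X y x)) \<and>
    (\<forall>x. veq X (vadd X (vzero X) x) x) \<and>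
    (\<forall>x. veq X (vadd X x (vsc X (-1) x)) (vzero X)) \<and>
    (\<forall>c x y. veq X (vsc X c (vadd X x y)) (vadd X (vsc X c x) (vsc X c y))) \<and>
    (\<forall>c d x. veq X (vsc X (c + d) x) (vadd X (vsc X c x) (vsc X d x))) \<and>
    (\<forall>c d x. veq X (vsc X (c * d) x) (vsc X c (vsc X d x))) \<and>
    (\<forall>x. veq X (vsc X 1 x) x)"

definition lfun :: "('k::field,'x) svsp \<Rightarrow> ('x \<Rightarrow> 'k) \<Rightarrow> bool" where
  "lfun X f \<longleftrightarrow> (\<forall>x y. f (vadd X x y) = f x + f y) \<and> (\<forall>c x. f (vsc X c x) = c * f x)
     \<and> (\<forall>x y. veq X x y \<longrightarrow> f x = f y)"

definition bilin :: "('k::field,'x) svsp \<Rightarrow> ('k,'y) svsp \<Rightarrow> ('x \<Rightarrow> 'y \<Rightarrow> 'k) \<Rightarrow> bool" where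
  "bilin V W f \<longleftrightarrow> (\<forall>y. lfun V (\<lambda>x. f x y)) \<and> (\<forall>x. lfun W (f x))"

text \<open>Tensor product V \<otimes> W: elements are represented by finite lists of simple tensors
 (formal sums); two representatives are identified iff every bilinear form V \<times> W \<rightarrow> k takes
 the same value on them (over a field, linear functionals separate points of V \<otimes> W and
 these are exactly the bilinear forms).\<close>

definition tens :: "('k::field,'x) svsp \<Rightarrow> ('k,'y) svsp \<Rightarrow> ('k, ('x \<times> 'y) list) svsp" where
  "tens V W = \<lparr>vadd = (@), vzero = [], vsc = (\<lambda>c. map (\<lambda>(x,y). (vsc V c x, y))),
     veq = (\<lambda>xs ys. \<forall>f. bilin V W f \<longrightarrow>
        sum_list (map (\<lambda>(x,y). f x y) xs) = sum_list (map (\<lambda>(x,y). f x y) ys))\<rparr>"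

definition slin :: "('k::field,'x) svsp \<Rightarrow> ('k,'y) svsp \<Rightarrow> ('x \<Rightarrow> 'y) \<Rightarrow> bool" where
  "slin X Y f \<longleftrightarrow> (\<forall>x x'. veq X x x' \<longrightarrow> veq Y (f x) (f x')) \<and>
     (\<forall>x y. veq Y (f (vadd X x y)) (vadd Y (f x) (f y))) \<and>
     (\<forall>c x. veq Y (f (vsc X c x)) (vsc Y c (f x)))"

definition salg :: "('k::field,'x) svsp \<Rightarrow> ('x \<Rightarrow> 'x \<Rightarrow> 'x) \<Rightarrow> 'x \<Rightarrow> bool" where
  "salg X m u \<longleftrightarrow> svs X \<and>
     (\<forall>x x' y y'. veq X x x' \<longrightarrow> veq X y y' \<longrightarrow> veq X (m x y) (m x' y')) \<and>
     (\<forall>x y z. veq X (m (vadd X x y) z) (vadd X (m x z) (m y z))) \<and>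
     (\<forall>x y z. veq X (m x (vadd X y z)) (vadd X (m x y) (m x z))) \<and>
     (\<forall>c x y. veq X (m (vsc X c x) y) (vsc X c (m x y))) \<and>
     (\<forall>c x y. veq X (m x (vsc X c y)) (vsc X c (m x y))) \<and>
     (\<forall>x y z. veq X (m (m x y) z) (m x (m y z))) \<and>
     (\<forall>x. veq X (m u x) x) \<and> (\<forall>x. veq X (m x u) x)"

record ('k,'h) bialg =
  hsc :: "'k \<Rightarrow> 'h \<Rightarrow> 'h"
  hmul :: "'h \<Rightarrow> 'h \<Rightarrow> 'h"
  hone :: 'h
  hcom :: "'h \<Rightarrow> ('h \<times> 'h) list"
  hcou :: "'h \<Rightarrow> 'k"

definition HV :: "('k,'h::ab_group_add) bialg \<Rightarrow> ('k,'h) svsp" where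
  "HV H = plainvs (hsc H)"

definition bialgebra :: "('k::field,'h::ab_group_add) bialg \<Rightarrow> bool" where
  "bialgebra H \<longleftrightarrow> vector_space (hsc H) \<and> salg (HV H) (hmul H) (hone H) \<and>
    slin (HV H) (tens (HV H) (HV H)) (hcom H) \<and> lfun (HV H) (hcou H) \<and>
    (\<forall>h. veq (tens (HV H) (tens (HV H) (HV H)))
        [(x1, [(x2, y)]). (x, y) \<leftarrow> hcom H h, (x1, x2) \<leftarrow> hcom H x]
        [(x, hcom H y). (x, y) \<leftarrow> hcom H h]) \<and>
    (\<forall>h. vsum (HV H) [hsc H (hcou H x) y. (x, y) \<leftarrow> hcom H h] = h) \<and>
    (\<forall>h. vsum (HV H) [hsc H (hcou H y) x. (x, y) \<leftarrow> hcom H h] = h) \<and>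
    (\<forall>h g. veq (tens (HV H) (HV H)) (hcom H (hmul H h g))
        [(hmul H x1 y1, hmul H x2 y2). (x1, x2) \<leftarrow> hcom H h, (y1, y2) \<leftarrow> hcom H g]) \<and>
    veq (tens (HV H) (HV H)) (hcom H (hone H)) [(hone H, hone H)] \<and>
    (\<forall>h g. hcou H (hmul H h g) = hcou H h * hcou H g) \<and> hcou H (hone H) = 1"

definition lmodalg :: "('k::field,'h::ab_group_add) bialg \<Rightarrow> ('k,'x) svsp \<Rightarrow>
    ('x \<Rightarrow> 'x \<Rightarrow> 'x) \<Rightarrow> 'x \<Rightarrow> ('h \<Rightarrow> 'x \<Rightarrow> 'x) \<Rightarrow> bool" where
  "lmodalg H X m u la \<longleftrightarrow> salg X m u \<and>
    (\<forall>h. slin X X (la h)) \<and> (\<forall>x. slin (HV H) X (\<lambda>h. la h x)) \<and>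
    (\<forall>h g x. veq X (la (hmul H h g) x) (la h (la g x))) \<and>
    (\<forall>x. veq X (la (hone H) x) x) \<and>
    (\<forall>h x y. veq X (la h (m x y)) (vsum X [m (la h1 x) (la h2 y). (h1, h2) \<leftarrow> hcom H h])) \<and>
    (\<forall>h. veq X (la h u) (vsc X (hcou H h) u))"

definition rmodalg :: "('k::field,'h::ab_group_add) bialg \<Rightarrow> ('k,'x) svsp \<Rightarrow>
    ('x \<Rightarrow> 'x \<Rightarrow> 'x) \<Rightarrow> 'x \<Rightarrow> ('x \<Rightarrow> 'h \<Rightarrow> 'x) \<Rightarrow> bool" where
  "rmodalg H X m u ra \<longleftrightarrow> salg X m u \<and>
    (\<forall>h. slin X X (\<lambda>x. ra x h)) \<and> (\<forall>x. slin (HV H) X (ra x)) \<and>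
    (\<forall>h g x. veq X (ra x (hmul H h g)) (ra (ra x h) g)) \<and>
    (\<forall>x. veq X (ra x (hone H)) x) \<and>
    (\<forall>h x y. veq X (ra (m x y) h) (vsum X [m (ra x h1) (ra y h2). (h1, h2) \<leftarrow> hcom H h])) \<and>
    (\<forall>h. veq X (ra u h) (vsc X (hcou H h) u))"

definition bimodalg :: "('k::field,'h::ab_group_add) bialg \<Rightarrow> ('k,'x) svsp \<Rightarrow>
    ('x \<Rightarrow> 'x \<Rightarrow> 'x) \<Rightarrow> 'x \<Rightarrow> ('h \<Rightarrow> 'x \<Rightarrow> 'x) \<Rightarrow> ('x \<Rightarrow> 'h \<Rightarrow> 'x) \<Rightarrow> bool" where
  "bimodalg H X m u la ra \<longleftrightarrow> lmodalg H X m u la \<and> rmodalg H X m u ra \<and>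
    (\<forall>h x g. veq X (la h (ra x g)) (ra (la h x) g))"

definition lcomodalg :: "('k::field,'h::ab_group_add) bialg \<Rightarrow> ('k,'x) svsp \<Rightarrow>
    ('x \<Rightarrow> 'x \<Rightarrow> 'x) \<Rightarrow> 'x \<Rightarrow> ('x \<Rightarrow> ('h \<times> 'x) list) \<Rightarrow> bool" where
  "lcomodalg H X m u co \<longleftrightarrow> salg X m u \<and>
    slin X (tens (HV H) X) co \<and>
    (\<forall>x. veq (tens (HV H) (tens (HV H) X))
        [(h1, [(h2, y)]). (h, y) \<leftarrow> co x, (h1, h2) \<leftarrow> hcom H h]
        [(h, co y). (h, y) \<leftarrow> co x]) \<and>
    (\<forall>x. veq X (vsum X [vsc X (hcou H h) y. (h, y) \<leftarrow> co x]) x) \<and>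
    (\<forall>x y. veq (tens (HV H) X) (co (m x y))
        [(hmul H h g, m x' y'). (h, x') \<leftarrow> co x, (g, y') \<leftarrow> co y]) \<and>
    veq (tens (HV H) X) (co u) [(hone H, u)]"

definition rcomodalg :: "('k::field,'h::ab_group_add) bialg \<Rightarrow> ('k,'x) svsp \<Rightarrow>
    ('x \<Rightarrow> 'x \<Rightarrow> 'x) \<Rightarrow> 'x \<Rightarrow> ('x \<Rightarrow> ('x \<times> 'h) list) \<Rightarrow> bool" where
  "rcomodalg H X m u co \<longleftrightarrow> salg X m u \<and>
    slin X (tens X (HV H)) co \<and>
    (\<forall>x. veq (tens X (tens (HV H) (HV H)))
        [(y0, [(y1, h)]). (y, h) \<leftarrow> co x, (y0, y1) \<leftarrow> co y]
        [(y, hcom H h). (y, h) \<leftarrow> co x]) \<and>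
    (\<forall>x. veq X (vsum X [vsc X (hcou H h) y. (y, h) \<leftarrow> co x]) x) \<and>
    (\<forall>x y. veq (tens X (HV H)) (co (m x y))
        [(m x' y', hmul H h g). (x', h) \<leftarrow> co x, (y', g) \<leftarrow> co y]) \<and>
    veq (tens X (HV H)) (co u) [(u, hone H)]"

definition bicomodalg :: "('k::field,'h::ab_group_add) bialg \<Rightarrow> ('k,'x) svsp \<Rightarrow>
    ('x \<Rightarrow> 'x \<Rightarrow> 'x) \<Rightarrow> 'x \<Rightarrow> ('x \<Rightarrow> ('h \<times> 'x) list) \<Rightarrow> ('x \<Rightarrow> ('x \<times> 'h) list) \<Rightarrow> bool" where
  "bicomodalg H X m u lam rho \<longleftrightarrow> lcomodalg H X m u lam \<and> rcomodalg H X m u rho \<and>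
    (\<forall>x. veq (tens (HV H) (tens X (HV H)))
        [(h, [(z, g)]). (y, g) \<leftarrow> rho x, (h, z) \<leftarrow> lam y]
        [(h, rho y). (h, y) \<leftarrow> lam x])"

text \<open>Algebras in the Yetter-Drinfeld category: left module algebra + left comodule algebra
 with h_1 a_(-1) \<otimes> h_2 \<cdot> a_(0) = (h_1 \<cdot> a)_(-1) h_2 \<otimes> (h_1 \<cdot> a)_(0).\<close>

definition ydalg :: "('k::field,'h::ab_group_add) bialg \<Rightarrow> ('k,'x) svsp \<Rightarrow>
    ('x \<Rightarrow> 'x \<Rightarrow> 'x) \<Rightarrow> 'x \<Rightarrow> ('h \<Rightarrow> 'x \<Rightarrow> 'x) \<Rightarrow> ('x \<Rightarrow> ('h \<times> 'x) list) \<Rightarrow> bool" where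
  "ydalg H X m u la co \<longleftrightarrow> lmodalg H X m u la \<and> lcomodalg H X m u co \<and>
    (\<forall>h a. veq (tens (HV H) X)
        [(hmul H h1 b, la h2 a0). (h1, h2) \<leftarrow> hcom H h, (b, a0) \<leftarrow> co a]
        [(hmul H c h2, a0). (h1, h2) \<leftarrow> hcom H h, (c, a0) \<leftarrow> co (la h1 a)])"

text \<open>Generalized smash product M \<blacktriangleright>< N (product on representatives, bilinearly extended):
 (m \<otimes> n)(m' \<otimes> n') = m (n_{-1} \<cdot> m') \<otimes> n_{0} n'.\<close>

definition gsm_mul :: "('m \<Rightarrow> 'm \<Rightarrow> 'm) \<Rightarrow> ('n \<Rightarrow> 'n \<Rightarrow> 'n) \<Rightarrow> ('h \<Rightarrow> 'm \<Rightarrow> 'm) \<Rightarrow>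
    ('n \<Rightarrow> ('h \<times> 'n) list) \<Rightarrow> ('m \<times> 'n) list \<Rightarrow> ('m \<times> 'n) list \<Rightarrow> ('m \<times> 'n) list" where
  "gsm_mul mM mN laM coN xs ys =
     [(mM p (laM h q), mN n0 n'). (p, n) \<leftarrow> xs, (q, n') \<leftarrow> ys, (h, n0) \<leftarrow> coN n]"

text \<open>L-R-smash product B \<natural> BB:
 (\<phi> \<otimes> u)(\<psi> \<otimes> u') = (\<phi> \<cdot> u'_<1>)(u_[-1] \<cdot> \<psi>) \<otimes> u_[0] u'_<0>.\<close>

definition lr_mul :: "('b \<Rightarrow> 'b \<Rightarrow> 'b) \<Rightarrow> ('u \<Rightarrow> 'u \<Rightarrow> 'u) \<Rightarrow> ('h \<Rightarrow> 'b \<Rightarrow> 'b) \<Rightarrow>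
    ('b \<Rightarrow> 'h \<Rightarrow> 'b) \<Rightarrow> ('u \<Rightarrow> ('h \<times> 'u) list) \<Rightarrow> ('u \<Rightarrow> ('u \<times> 'h) list) \<Rightarrow>
    ('b \<times> 'u) list \<Rightarrow> ('b \<times> 'u) list \<Rightarrow> ('b \<times> 'u) list" where
  "lr_mul mB mU laB raB lam rho xs ys =
     [(mB (raB p g) (laB h q), mU u0 u0'). (p, u) \<leftarrow> xs, (q, u') \<leftarrow> ys,
        (u0', g) \<leftarrow> rho u', (h, u0) \<leftarrow> lam u]"

definition sm_lact :: "('k,'h) bialg \<Rightarrow> ('h \<Rightarrow> 'p \<Rightarrow> 'p) \<Rightarrow> ('h \<Rightarrow> 'a \<Rightarrow> 'a) \<Rightarrow>
    'h \<Rightarrow> ('p \<times> 'a) list \<Rightarrow> ('p \<times> 'a) list" where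
  "sm_lact H laP laA h xs = [(laP h1 p, laA h2 a). (p, a) \<leftarrow> xs, (h1, h2) \<leftarrow> hcom H h]"

definition sm_ract :: "('p \<Rightarrow> 'h \<Rightarrow> 'p) \<Rightarrow> ('p \<times> 'a) list \<Rightarrow> 'h \<Rightarrow> ('p \<times> 'a) list" where
  "sm_ract raP xs h = [(raP p h, a). (p, a) \<leftarrow> xs]"

definition sm_rco :: "('u \<Rightarrow> ('u \<times> 'h) list) \<Rightarrow> ('a \<times> 'u) list \<Rightarrow> (('a \<times> 'u) list \<times> 'h) list" where
  "sm_rco rho xs = [([(a, u0)], g). (a, u) \<leftarrow> xs, (u0, g) \<leftarrow> rho u]"

definition sm_lco :: "('k,'h) bialg \<Rightarrow> ('a \<Rightarrow> ('h \<times> 'a) list) \<Rightarrow> ('u \<Rightarrow> ('h \<times> 'u) list) \<Rightarrow>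
    ('a \<times> 'u) list \<Rightarrow> ('h \<times> ('a \<times> 'u) list) list" where
  "sm_lco H coA lam xs = [(hmul H b h, [(a0, u0)]). (a, u) \<leftarrow> xs, (b, a0) \<leftarrow> coA a, (h, u0) \<leftarrow> lam u]"

text \<open>The identity of P \<otimes> A \<otimes> U, read from (P \<otimes> A) \<otimes> U to P \<otimes> (A \<otimes> U) on representatives.\<close>

definition reassoc :: "(('p \<times> 'a) list \<times> 'u) list \<Rightarrow> ('p \<times> ('a \<times> 'u) list) list" where
  "reassoc xs = [(p, [(a, u)]). (ys, u) \<leftarrow> xs, (p, a) \<leftarrow> ys]"

definition alg_iso :: "('k::field,'x) svsp \<Rightarrow> ('k,'y) svsp \<Rightarrow> ('x \<Rightarrow> 'x \<Rightarrow> 'x) \<Rightarrow> 'x \<Rightarrow>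
    ('y \<Rightarrow> 'y \<Rightarrow> 'y) \<Rightarrow> 'y \<Rightarrow> ('x \<Rightarrow> 'y) \<Rightarrow> bool" where
  "alg_iso X Y mX uX mY uY f \<longleftrightarrow> salg X mX uX \<and> salg Y mY uY \<and> slin X Y f \<and>
     (\<forall>x x'. veq Y (f (mX x x')) (mY (f x) (f x'))) \<and> veq Y (f uX) uY \<and>
     (\<forall>x x'. veq Y (f x) (f x') \<longrightarrow> veq X x x') \<and> (\<forall>y. \<exists>x. veq Y (f x) y)"

end

(*
  Write P for the H-bimodule algebra, A for the algebra in the Yetter-Drinfeld category and U for
  the H-bicomodule algebra, >< for the generalized smash product and # for the L-R-smash product.
  Elements of tensor products are lists of simple tensors, and in an iterated tensor product of
  vector spaces two representatives are equal iff every multilinear form has the same sum on them.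
  Each axiom thereby becomes an identity between iterated finite sums in P, A, U and H, which
  follows from the defining identities of the given structures and interchanges of summation.
  The Yetter-Drinfeld condition is needed exactly where the action of H has to pass the coaction
  of A: for the left action on products in P >< A and for the left coaction on products in A >< U.
  Associativity of P # (A >< U) is not computed but transported from (P >< A) # U along the
  reassociation map, which is multiplicative and bijective up to tensor equality.
*)
theory Submission
  imports Defs
begin

definition pair_sum :: "('a \<times> 'b) list \<Rightarrow> ('a \<Rightarrow> 'b \<Rightarrow> 'c::comm_monoid_add) \<Rightarrow> 'c" where
  "pair_sum xs F = sum_list (map (\<lambda>(a,b). F a b) xs)"

lemma pair_sum_Nil[simp]: "pair_sum [] F = 0"
  by (simp add: pair_sum_def)

lemma pair_sum_Cons[simp]: "pair_sum ((a,b)#xs) F = F a b + pair_sum xs F"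
  by (simp add: pair_sum_def)

lemma pair_sum_append[simp]: "pair_sum (xs@ys) F = pair_sum xs F + pair_sum ys F"
  by (simp add: pair_sum_def)

lemma pair_sum_concat_map[simp]:
  "pair_sum (concat (map (\<lambda>(a,b). G a b) xs)) F = pair_sum xs (\<lambda>a b. pair_sum (G a b) F)"
  by (induction xs) auto

lemma pair_sum_map[simp]:
  "pair_sum (map (\<lambda>(a,b). (g a b, h a b)) xs) F = pair_sum xs (\<lambda>a b. F (g a b) (h a b))"
  by (induction xs) auto

lemma pair_sum_add[simp]: "pair_sum xs (\<lambda>a b. F a b + G a b) = pair_sum xs F + pair_sum xs G"
  by (induction xs) (auto simp: algebra_simps)

lemma pair_sum_zero[simp]: "pair_sum xs (\<lambda>a b. 0) = 0"
  by (induction xs) auto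

lemma pair_sum_cmult[simp]: "pair_sum xs (\<lambda>a b. (c::'c::comm_semiring_0) * F a b) = c * pair_sum xs F"
  by (induction xs) (auto simp: algebra_simps)

lemma pair_sum_hom:
  assumes "\<And>x y. L (x+y) = L x + L y" "L 0 = 0"
  shows "L (pair_sum xs F) = pair_sum xs (\<lambda>a b. L (F a b))"
  by (induction xs) (auto simp: assms)

lemma pair_sum_swap:
  "pair_sum xs (\<lambda>a b. pair_sum ys (\<lambda>c d. F a b c d)) = pair_sum ys (\<lambda>c d. pair_sum xs (\<lambda>a b. F a b c d))"
  by (induction xs) auto

lemma pair_sum_ext: "(\<And>a b. F a b = G a b) \<Longrightarrow> pair_sum xs F = pair_sum xs G"
  by (induction xs) auto

lemma sum_list_pair_sum: "sum_list (map (\<lambda>(a,b). F a b) xs) = pair_sum xs F"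
  by (simp add: pair_sum_def)

section \<open>Multilinear forms on vector spaces\<close>

definition linear_form :: "('k \<Rightarrow> 'x \<Rightarrow> 'x) \<Rightarrow> ('x::plus \<Rightarrow> 'k::{plus,times}) \<Rightarrow> bool" where
  "linear_form s g \<longleftrightarrow> (\<forall>x y. g (x+y) = g x + g y) \<and> (\<forall>c x. g (s c x) = c * g x)"

definition bilinear_form :: "('k \<Rightarrow> 'x \<Rightarrow> 'x) \<Rightarrow> ('k \<Rightarrow> 'y \<Rightarrow> 'y) \<Rightarrow>
    ('x::plus \<Rightarrow> 'y::plus \<Rightarrow> 'k::{plus,times}) \<Rightarrow> bool" where
  "bilinear_form s1 s2 G \<longleftrightarrow> (\<forall>y. linear_form s1 (\<lambda>x. G x y)) \<and> (\<forall>x. linear_form s2 (G x))"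

definition trilinear_form :: "('k \<Rightarrow> 'x \<Rightarrow> 'x) \<Rightarrow> ('k \<Rightarrow> 'y \<Rightarrow> 'y) \<Rightarrow> ('k \<Rightarrow> 'z \<Rightarrow> 'z) \<Rightarrow>
    ('x::plus \<Rightarrow> 'y::plus \<Rightarrow> 'z::plus \<Rightarrow> 'k::{plus,times}) \<Rightarrow> bool" where
  "trilinear_form s1 s2 s3 T \<longleftrightarrow> (\<forall>y z. linear_form s1 (\<lambda>x. T x y z)) \<and>
     (\<forall>x z. linear_form s2 (\<lambda>y. T x y z)) \<and> (\<forall>x y. linear_form s3 (T x y))"

definition quadrilinear_form :: "('k \<Rightarrow> 'x \<Rightarrow> 'x) \<Rightarrow> ('k \<Rightarrow> 'y \<Rightarrow> 'y) \<Rightarrow> ('k \<Rightarrow> 'z \<Rightarrow> 'z) \<Rightarrow>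
    ('k \<Rightarrow> 'w \<Rightarrow> 'w) \<Rightarrow> ('x::plus \<Rightarrow> 'y::plus \<Rightarrow> 'z::plus \<Rightarrow> 'w::plus \<Rightarrow> 'k::{plus,times}) \<Rightarrow> bool" where
  "quadrilinear_form s1 s2 s3 s4 Q \<longleftrightarrow> (\<forall>y z w. linear_form s1 (\<lambda>x. Q x y z w)) \<and>
     (\<forall>x z w. linear_form s2 (\<lambda>y. Q x y z w)) \<and> (\<forall>x y w. linear_form s3 (\<lambda>z. Q x y z w)) \<and>
     (\<forall>x y z. linear_form s4 (Q x y z))"

lemmas multilinear_defs = linear_form_def bilinear_form_def trilinear_form_def quadrilinear_form_def

lemma linear_form_rules:
  fixes g :: "'x::comm_monoid_add \<Rightarrow> 'k::comm_ring"
  assumes "linear_form s g"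
  shows "g (x+y) = g x + g y" "g (s c x) = c * g x" "g 0 = 0"
    "g (pair_sum xs F) = pair_sum xs (\<lambda>a b. g (F a b))"
proof -
  show add: "g (x+y) = g x + g y" for x y using assms by (simp add: linear_form_def)
  show "g (s c x) = c * g x" using assms by (simp add: linear_form_def)
  show zero: "g 0 = 0" using add[of 0 0] by simp
  show "g (pair_sum xs F) = pair_sum xs (\<lambda>a b. g (F a b))" by (rule pair_sum_hom[OF add zero])
qed

text \<open>The rules for partial applications let the simplifier distribute a form over a sum
  in one argument before the remaining arguments are supplied.\<close>

lemma bilinear_form_rules:
  fixes G :: "'x::comm_monoid_add \<Rightarrow> 'y::comm_monoid_add \<Rightarrow> 'k::comm_ring"
  assumes "bilinear_form s1 s2 G"
  shows "G (x+x') y = G x y + G x' y" "G (s1 c x) y = c * G x y" "G 0 y = 0"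
    "G (pair_sum xs F) y = pair_sum xs (\<lambda>a b. G (F a b) y)"
    "G x (y+y') = G x y + G x y'" "G x (s2 c y) = c * G x y" "G x 0 = 0"
    "G x (pair_sum ys F2) = pair_sum ys (\<lambda>a b. G x (F2 a b))"
    "G (x+x') = (\<lambda>y. G x y + G x' y)" "G (s1 c x) = (\<lambda>y. c * G x y)"
  using linear_form_rules[OF assms[unfolded bilinear_form_def, THEN conjunct1, rule_format]]
    linear_form_rules[OF assms[unfolded bilinear_form_def, THEN conjunct2, rule_format]]
  by (auto simp: fun_eq_iff)

lemma trilinear_form_rules:
  fixes T :: "'x::comm_monoid_add \<Rightarrow> 'y::comm_monoid_add \<Rightarrow> 'z::comm_monoid_add \<Rightarrow> 'k::comm_ring"
  assumes "trilinear_form s1 s2 s3 T"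
  shows "T (x+x') y z = T x y z + T x' y z" "T (s1 c x) y z = c * T x y z" "T 0 y z = 0"
    "T (pair_sum xs F) y z = pair_sum xs (\<lambda>a b. T (F a b) y z)"
    "T x (y+y') z = T x y z + T x y' z" "T x (s2 c y) z = c * T x y z" "T x 0 z = 0"
    "T x (pair_sum ys F2) z = pair_sum ys (\<lambda>a b. T x (F2 a b) z)"
    "T x y (z+z') = T x y z + T x y z'" "T x y (s3 c z) = c * T x y z" "T x y 0 = 0"
    "T x y (pair_sum zs F3) = pair_sum zs (\<lambda>a b. T x y (F3 a b))"
    "T (x+x') = (\<lambda>y z. T x y z + T x' y z)" "T (s1 c x) = (\<lambda>y z. c * T x y z)"
    "T x (y+y') = (\<lambda>z. T x y z + T x y' z)" "T x (s2 c y) = (\<lambda>z. c * T x y z)"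
  using linear_form_rules[OF assms[unfolded trilinear_form_def, THEN conjunct1, rule_format]]
    linear_form_rules[OF assms[unfolded trilinear_form_def, THEN conjunct2, THEN conjunct1, rule_format]]
    linear_form_rules[OF assms[unfolded trilinear_form_def, THEN conjunct2, THEN conjunct2, rule_format]]
  by (auto simp: fun_eq_iff)

lemma quadrilinear_form_rules:
  fixes Q :: "'x::comm_monoid_add \<Rightarrow> 'y::comm_monoid_add \<Rightarrow> 'z::comm_monoid_add \<Rightarrow>
    'w::comm_monoid_add \<Rightarrow> 'k::comm_ring"
  assumes "quadrilinear_form s1 s2 s3 s4 Q"
  shows "Q (x+x') y z w = Q x y z w + Q x' y z w" "Q (s1 c x) y z w = c * Q x y z w"
    "Q x (y+y') z w = Q x y z w + Q x y' z w" "Q x (s2 c y) z w = c * Q x y z w"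
    "Q x y (z+z') w = Q x y z w + Q x y z' w" "Q x y (s3 c z) w = c * Q x y z w"
    "Q x y z (w+w') = Q x y z w + Q x y z w'" "Q x y z (s4 c w) = c * Q x y z w"
    "Q (pair_sum xs F) y z w = pair_sum xs (\<lambda>a b. Q (F a b) y z w)"
    "Q x (pair_sum ys F2) z w = pair_sum ys (\<lambda>a b. Q x (F2 a b) z w)"
    "Q x y (pair_sum zs F3) w = pair_sum zs (\<lambda>a b. Q x y (F3 a b) w)"
    "Q x y z (pair_sum ws F4) = pair_sum ws (\<lambda>a b. Q x y z (F4 a b))"
    "Q (x+x') = (\<lambda>y z w. Q x y z w + Q x' y z w)" "Q (s1 c x) = (\<lambda>y z w. c * Q x y z w)"
    "Q x (y+y') = (\<lambda>z w. Q x y z w + Q x y' z w)" "Q x (s2 c y) = (\<lambda>z w. c * Q x y z w)"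
    "Q x y (z+z') = (\<lambda>w. Q x y z w + Q x y z' w)" "Q x y (s3 c z) = (\<lambda>w. c * Q x y z w)"
  using linear_form_rules[OF assms[unfolded quadrilinear_form_def, THEN conjunct1, rule_format]]
    linear_form_rules[OF assms[unfolded quadrilinear_form_def, THEN conjunct2, THEN conjunct1, rule_format]]
    linear_form_rules[OF assms[unfolded quadrilinear_form_def, THEN conjunct2, THEN conjunct2,
      THEN conjunct1, rule_format]]
    linear_form_rules[OF assms[unfolded quadrilinear_form_def, THEN conjunct2, THEN conjunct2,
      THEN conjunct2, rule_format]]
  by (auto simp: fun_eq_iff)

section \<open>Tensor products of setoid spaces\<close>

lemma tens_simps[simp]:
  "vadd (tens V W) = (@)" "vzero (tens V W) = []"
  "vsc (tens V W) c xs = map (\<lambda>(x,y). (vsc V c x, y)) xs"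
  by (simp_all add: tens_def)

lemma veq_tens_iff: "veq (tens V W) xs ys \<longleftrightarrow> (\<forall>f. bilin V W f \<longrightarrow> pair_sum xs f = pair_sum ys f)"
  by (simp add: tens_def pair_sum_def)

lemma veq_tens_refl: "veq (tens V W) x x"
  by (simp add: veq_tens_iff)

lemma plainvs_simps[simp]:
  "vadd (plainvs s) = (+)" "vzero (plainvs s) = 0" "vsc (plainvs s) = s" "veq (plainvs s) = (=)"
  by (simp_all add: plainvs_def)

lemma HV_plain: "HV H = plainvs (hsc H)"
  by (simp add: HV_def)

lemma vsum_tens[simp]: "vsum (tens V W) xss = concat xss"
  by (induction xss) (auto simp: vsum_def)

lemma vsum_plain[simp]: "vsum (plainvs s) xs = sum_list xs"
  by (induction xs) (auto simp: vsum_def)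

lemma lfun_plain: "lfun (plainvs s) g \<longleftrightarrow> linear_form s g"
  by (simp add: lfun_def linear_form_def)

lemma bilin_plain: "bilin (plainvs s1) (plainvs s2) G \<longleftrightarrow> bilinear_form s1 s2 G"
  by (simp add: bilin_def bilinear_form_def lfun_plain)

lemma bilin_lfun_left: "bilin V W f \<Longrightarrow> lfun V (\<lambda>x. f x y)"
  by (simp add: bilin_def)

lemma bilin_lfun_right: "bilin V W f \<Longrightarrow> lfun W (f x)"
  by (simp add: bilin_def)

lemma lfun_pair_sum_param:
  fixes T :: "'v \<Rightarrow> 'w \<Rightarrow> 'x \<Rightarrow> 'k::field"
  assumes "\<And>w x. lfun V (\<lambda>v. T v w x)"
  shows "lfun V (\<lambda>v. pair_sum zs (T v))"
  using assms by (induction zs) (auto simp: lfun_def algebra_simps)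

lemma lfun_tens_pair_sum:
  fixes F :: "'x \<Rightarrow> 'y \<Rightarrow> 'k::field"
  assumes "bilin V W F"
  shows "lfun (tens V W) (\<lambda>zs. pair_sum zs F)"
proof -
  have "pair_sum (map (\<lambda>(x, y). (vsc V c x, y)) xs) F = c * pair_sum xs F" for c xs
    using bilin_lfun_left[OF assms] by (induction xs) (auto simp: lfun_def algebra_simps)
  then show ?thesis using assms by (auto simp: lfun_def veq_tens_iff)
qed

lemma pair_sum_vsc:
  fixes f :: "'x \<Rightarrow> 'y \<Rightarrow> 'k::field"
  assumes "bilin V W f"
  shows "pair_sum xs (\<lambda>a b. f (vsc V c a) b) = c * pair_sum xs f"
  using lfun_tens_pair_sum[OF assms] by (simp add: lfun_def)

lemma lfun_tens_eq_pair_sum: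
  fixes g :: "('x \<times> 'y) list \<Rightarrow> 'k::field"
  assumes "lfun (tens V W) g"
  shows "g zs = pair_sum zs (\<lambda>v w. g [(v,w)])"
proof -
  have add: "g (xs @ ys) = g xs + g ys" for xs ys using assms by (auto simp: lfun_def)
  have "g [] = g [] + g []" using add[of "[]" "[]"] by simp
  then have "g [] = 0" by (metis add_cancel_right_right)
  then show ?thesis
  proof (induction zs)
    case (Cons p zs) then show ?case using add[of "[p]" zs] by (cases p) auto
  qed simp
qed

lemma lfun_tens_bilin:
  fixes g :: "('x \<times> 'y) list \<Rightarrow> 'k::field"
  assumes "lfun (tens V W) g"
  shows "bilin V W (\<lambda>v w. g [(v,w)])"
proof -
  have add: "g (xs @ ys) = g xs + g ys" for xs ys using assms by (auto simp: lfun_def)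
  have scale: "g (map (\<lambda>(x,y). (vsc V c x, y)) xs) = c * g xs" for c xs
    using assms by (auto simp: lfun_def)
  have resp: "veq (tens V W) xs ys \<Longrightarrow> g xs = g ys" for xs ys
    using assms by (auto simp: lfun_def)
  have tens_rules:
    "veq (tens V W) [(vadd V x x', y)] [(x,y),(x',y)]"
    "veq (tens V W) [(x, vadd W y y')] [(x,y),(x,y')]"
    "veq (tens V W) [(x, vsc W c y)] [(vsc V c x,y)]"
    "veq V x x' \<Longrightarrow> veq (tens V W) [(x, y)] [(x',y)]"
    "veq W y y' \<Longrightarrow> veq (tens V W) [(x, y)] [(x,y')]" for x x' y y' c
    by (auto simp: veq_tens_iff bilin_def lfun_def)
  show ?thesis
    unfolding bilin_def lfun_def
    using resp[OF tens_rules(1)] resp[OF tens_rules(2)] resp[OF tens_rules(3)]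
      resp[OF tens_rules(4)] resp[OF tens_rules(5)] add[of "[_]" "[_]"] scale[of _ "[_]"]
    by auto
qed

lemma svs_tens: "svs (tens (V :: ('k::field,'x) svsp) W)"
proof -
  have "pair_sum xs (\<lambda>a b. f (vsc V c (vsc V d a)) b) = c * (d * pair_sum xs f)"
    if "bilin V W f" for c d xs f
    using bilin_lfun_left[OF that] by (induction xs) (auto simp: lfun_def algebra_simps)
  then show ?thesis
    unfolding svs_def
    by (intro conjI allI impI)
      (auto simp: veq_tens_iff equivp_def fun_eq_iff pair_sum_vsc algebra_simps simp del: map_map)
qed

lemma bilin_tens_rightE:
  fixes f :: "'v \<Rightarrow> ('w \<times> 'x) list \<Rightarrow> 'k::field"
  assumes f: "bilin V (tens W X) f"
  obtains T where "\<And>v. bilin W X (T v)" "\<And>w x. lfun V (\<lambda>v. T v w x)"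
    "f = (\<lambda>v zs. pair_sum zs (T v))"
proof
  show "bilin W X (\<lambda>w x. f v [(w,x)])" for v
    using lfun_tens_bilin bilin_lfun_right[OF f] by blast
  show "lfun V (\<lambda>v. f v [(w,x)])" for w x
    using bilin_lfun_left[OF f] by blast
  show "f = (\<lambda>v zs. pair_sum zs (\<lambda>w x. f v [(w,x)]))"
    using lfun_tens_eq_pair_sum[OF bilin_lfun_right[OF f]] by blast
qed

lemma bilin_tens_leftE:
  fixes f :: "('v \<times> 'w) list \<Rightarrow> 'x \<Rightarrow> 'k::field"
  assumes f: "bilin (tens V W) X f"
  obtains T where "\<And>x. bilin V W (\<lambda>v w. T v w x)" "\<And>v w. lfun X (T v w)"
    "f = (\<lambda>zs x. pair_sum zs (\<lambda>v w. T v w x))"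
proof
  show "bilin V W (\<lambda>v w. f [(v,w)] x)" for x
    using lfun_tens_bilin bilin_lfun_left[OF f] by blast
  show "lfun X (f [(v,w)])" for v w
    using bilin_lfun_right[OF f] by blast
  show "f = (\<lambda>zs x. pair_sum zs (\<lambda>v w. f [(v,w)] x))"
    using lfun_tens_eq_pair_sum[OF bilin_lfun_left[OF f]] by blast
qed

lemma bilin_tens_rightI:
  fixes T :: "'v \<Rightarrow> 'w \<Rightarrow> 'x \<Rightarrow> 'k::field"
  assumes "\<And>v. bilin W X (T v)" "\<And>w x. lfun V (\<lambda>v. T v w x)"
  shows "bilin V (tens W X) (\<lambda>v zs. pair_sum zs (T v))"
  unfolding bilin_def using assms lfun_pair_sum_param lfun_tens_pair_sum by blast

lemma bilin_tens_leftI: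
  fixes T :: "'v \<Rightarrow> 'w \<Rightarrow> 'x \<Rightarrow> 'k::field"
  assumes "\<And>x. bilin V W (\<lambda>v w. T v w x)" "\<And>v w. lfun X (T v w)"
  shows "bilin (tens V W) X (\<lambda>zs x. pair_sum zs (\<lambda>v w. T v w x))"
  unfolding bilin_def
  using assms lfun_pair_sum_param[of X "\<lambda>x v w. T v w x"] lfun_tens_pair_sum by blast

lemma trilinear_form_iff_right:
  "trilinear_form s1 s2 s3 T \<longleftrightarrow>
     (\<forall>v. bilin (plainvs s2) (plainvs s3) (T v)) \<and> (\<forall>w x. lfun (plainvs s1) (\<lambda>v. T v w x))"
  by (auto simp: bilin_plain lfun_plain trilinear_form_def bilinear_form_def)

lemma trilinear_form_iff_left:
  "trilinear_form s1 s2 s3 T \<longleftrightarrow>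
     (\<forall>x. bilin (plainvs s1) (plainvs s2) (\<lambda>v w. T v w x)) \<and> (\<forall>v w. lfun (plainvs s3) (T v w))"
  by (auto simp: bilin_plain lfun_plain trilinear_form_def bilinear_form_def)

lemma bilin_tens3_rightE:
  fixes f :: "'v::ab_group_add \<Rightarrow> ('w::ab_group_add \<times> 'x::ab_group_add) list \<Rightarrow> 'k::field"
  assumes "bilin (plainvs s1) (tens (plainvs s2) (plainvs s3)) f"
  obtains T where "trilinear_form s1 s2 s3 T" "f = (\<lambda>v zs. pair_sum zs (T v))"
  using bilin_tens_rightE[OF assms] unfolding trilinear_form_iff_right by blast

lemma bilin_tens3_leftE:
  fixes f :: "('v::ab_group_add \<times> 'w::ab_group_add) list \<Rightarrow> 'x::ab_group_add \<Rightarrow> 'k::field"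
  assumes "bilin (tens (plainvs s1) (plainvs s2)) (plainvs s3) f"
  obtains T where "trilinear_form s1 s2 s3 T" "f = (\<lambda>zs x. pair_sum zs (\<lambda>v w. T v w x))"
  using bilin_tens_leftE[OF assms] unfolding trilinear_form_iff_left by blast

lemma bilin_tens3_rightI:
  "trilinear_form s1 s2 s3 T \<Longrightarrow>
    bilin (plainvs s1) (tens (plainvs s2) (plainvs s3)) (\<lambda>v zs. pair_sum zs (T v))"
  by (rule bilin_tens_rightI) (auto simp: trilinear_form_iff_right)

lemma bilin_tens3_leftI:
  "trilinear_form s1 s2 s3 T \<Longrightarrow>
    bilin (tens (plainvs s1) (plainvs s2)) (plainvs s3) (\<lambda>zs x. pair_sum zs (\<lambda>v w. T v w x))"
  by (rule bilin_tens_leftI) (auto simp: trilinear_form_iff_left)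

lemma veq_tens2_iff:
  "veq (tens (plainvs s1) (plainvs s2)) xs ys \<longleftrightarrow>
     (\<forall>F. bilinear_form s1 s2 F \<longrightarrow> pair_sum xs F = pair_sum ys F)"
  by (simp add: veq_tens_iff bilin_plain)

lemma veq_tens3_right_iff:
  fixes xs :: "('v::ab_group_add \<times> ('w::ab_group_add \<times> 'x::ab_group_add) list) list"
  shows "veq (tens (plainvs s1) (tens (plainvs s2) (plainvs s3))) xs ys \<longleftrightarrow>
    (\<forall>T::'v \<Rightarrow> 'w \<Rightarrow> 'x \<Rightarrow> 'k::field. trilinear_form s1 s2 s3 T \<longrightarrow>
       pair_sum xs (\<lambda>v zs. pair_sum zs (T v)) = pair_sum ys (\<lambda>v zs. pair_sum zs (T v)))"
    (is "_ \<longleftrightarrow> (\<forall>T. _ \<longrightarrow> ?E T)")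
  unfolding veq_tens_iff
proof (intro iffI allI impI)
  fix T :: "'v \<Rightarrow> 'w \<Rightarrow> 'x \<Rightarrow> 'k"
  assume "\<forall>f. bilin (plainvs s1) (tens (plainvs s2) (plainvs s3)) f \<longrightarrow> pair_sum xs f = pair_sum ys f"
    and "trilinear_form s1 s2 s3 T"
  then show "?E T" using bilin_tens3_rightI by blast
next
  fix f assume tests: "\<forall>T. trilinear_form s1 s2 s3 T \<longrightarrow> ?E T"
    and "bilin (plainvs s1) (tens (plainvs s2) (plainvs s3)) f"
  then obtain T where "trilinear_form s1 s2 s3 T" "f = (\<lambda>v zs. pair_sum zs (T v))"
    by (elim bilin_tens3_rightE)
  with tests show "pair_sum xs f = pair_sum ys f" by auto
qed

lemma veq_tens3_left_iff:
  fixes xs :: "(('v::ab_group_add \<times> 'w::ab_group_add) list \<times> 'x::ab_group_add) list"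
  shows "veq (tens (tens (plainvs s1) (plainvs s2)) (plainvs s3)) xs ys \<longleftrightarrow>
    (\<forall>T::'v \<Rightarrow> 'w \<Rightarrow> 'x \<Rightarrow> 'k::field. trilinear_form s1 s2 s3 T \<longrightarrow>
       pair_sum xs (\<lambda>zs x. pair_sum zs (\<lambda>v w. T v w x)) = pair_sum ys (\<lambda>zs x. pair_sum zs (\<lambda>v w. T v w x)))"
    (is "_ \<longleftrightarrow> (\<forall>T. _ \<longrightarrow> ?E T)")
  unfolding veq_tens_iff
proof (intro iffI allI impI)
  fix T :: "'v \<Rightarrow> 'w \<Rightarrow> 'x \<Rightarrow> 'k"
  assume "\<forall>f. bilin (tens (plainvs s1) (plainvs s2)) (plainvs s3) f \<longrightarrow> pair_sum xs f = pair_sum ys f"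
    and "trilinear_form s1 s2 s3 T"
  then show "?E T" using bilin_tens3_leftI by blast
next
  fix f assume tests: "\<forall>T. trilinear_form s1 s2 s3 T \<longrightarrow> ?E T"
    and "bilin (tens (plainvs s1) (plainvs s2)) (plainvs s3) f"
  then obtain T where "trilinear_form s1 s2 s3 T" "f = (\<lambda>zs x. pair_sum zs (\<lambda>v w. T v w x))"
    by (elim bilin_tens3_leftE)
  with tests show "pair_sum xs f = pair_sum ys f" by auto
qed


lemma veq_tens2I:
  fixes xs :: "('x::ab_group_add \<times> 'y::ab_group_add) list"
  assumes "\<And>F::'x \<Rightarrow> 'y \<Rightarrow> 'k::field. bilinear_form s1 s2 F \<Longrightarrow> pair_sum xs F = pair_sum ys F"
  shows "veq (tens (plainvs s1) (plainvs s2)) xs ys"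
  using assms veq_tens2_iff by blast

lemma veq_tens2D:
  fixes F :: "'x::ab_group_add \<Rightarrow> 'y::ab_group_add \<Rightarrow> 'k::field"
  assumes "veq (tens (plainvs s1) (plainvs s2)) xs ys" "bilinear_form s1 s2 F"
  shows "pair_sum xs F = pair_sum ys F"
  using assms veq_tens2_iff by blast

lemma veq_tens3_rightI:
  fixes xs :: "('v::ab_group_add \<times> ('w::ab_group_add \<times> 'x::ab_group_add) list) list"
  assumes "\<And>T::'v \<Rightarrow> 'w \<Rightarrow> 'x \<Rightarrow> 'k::field. trilinear_form s1 s2 s3 T \<Longrightarrow>
     pair_sum xs (\<lambda>v zs. pair_sum zs (T v)) = pair_sum ys (\<lambda>v zs. pair_sum zs (T v))"
  shows "veq (tens (plainvs s1) (tens (plainvs s2) (plainvs s3))) xs ys"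
  using assms veq_tens3_right_iff by blast

lemma veq_tens3_rightD:
  fixes T :: "'v::ab_group_add \<Rightarrow> 'w::ab_group_add \<Rightarrow> 'x::ab_group_add \<Rightarrow> 'k::field"
  assumes "veq (tens (plainvs s1) (tens (plainvs s2) (plainvs s3))) xs ys" "trilinear_form s1 s2 s3 T"
  shows "pair_sum xs (\<lambda>v zs. pair_sum zs (T v)) = pair_sum ys (\<lambda>v zs. pair_sum zs (T v))"
  using assms veq_tens3_right_iff by blast

lemma veq_tens3_leftI:
  fixes xs :: "(('v::ab_group_add \<times> 'w::ab_group_add) list \<times> 'x::ab_group_add) list"
  assumes "\<And>T::'v \<Rightarrow> 'w \<Rightarrow> 'x \<Rightarrow> 'k::field. trilinear_form s1 s2 s3 T \<Longrightarrow>
     pair_sum xs (\<lambda>zs x. pair_sum zs (\<lambda>v w. T v w x)) = pair_sum ys (\<lambda>zs x. pair_sum zs (\<lambda>v w. T v w x))"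
  shows "veq (tens (tens (plainvs s1) (plainvs s2)) (plainvs s3)) xs ys"
  using assms veq_tens3_left_iff by blast

lemma veq_tens3_leftD:
  fixes T :: "'v::ab_group_add \<Rightarrow> 'w::ab_group_add \<Rightarrow> 'x::ab_group_add \<Rightarrow> 'k::field"
  assumes "veq (tens (tens (plainvs s1) (plainvs s2)) (plainvs s3)) xs ys" "trilinear_form s1 s2 s3 T"
  shows "pair_sum xs (\<lambda>zs x. pair_sum zs (\<lambda>v w. T v w x)) = pair_sum ys (\<lambda>zs x. pair_sum zs (\<lambda>v w. T v w x))"
  using assms veq_tens3_left_iff by blast

lemma veq_tens4_rightI:
  fixes xs :: "('h::ab_group_add \<times> ('g::ab_group_add \<times> ('a::ab_group_add \<times> 'u::ab_group_add) list) list) list"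
  assumes "\<And>Q::'h \<Rightarrow> 'g \<Rightarrow> 'a \<Rightarrow> 'u \<Rightarrow> 'k::field. quadrilinear_form s1 s2 s3 s4 Q \<Longrightarrow>
     pair_sum xs (\<lambda>v zs. pair_sum zs (\<lambda>w ys. pair_sum ys (Q v w))) =
     pair_sum ys (\<lambda>v zs. pair_sum zs (\<lambda>w ys. pair_sum ys (Q v w)))"
  shows "veq (tens (plainvs s1) (tens (plainvs s2) (tens (plainvs s3) (plainvs s4)))) xs ys"
  unfolding veq_tens_iff
proof (intro allI impI)
  fix f assume f: "bilin (plainvs s1) (tens (plainvs s2) (tens (plainvs s3) (plainvs s4))) f"
  obtain T where T1: "\<And>v. bilin (plainvs s2) (tens (plainvs s3) (plainvs s4)) (T v)"
    and T2: "\<And>w x. lfun (plainvs s1) (\<lambda>v. T v w x)" and f_eq: "f = (\<lambda>v zs. pair_sum zs (T v))"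
    using bilin_tens_rightE[OF f] by blast
  define Q where "Q = (\<lambda>v w a u. T v w [(a,u)])"
  have T_eq: "T = (\<lambda>v w ys. pair_sum ys (Q v w))"
    unfolding Q_def using lfun_tens_eq_pair_sum[OF bilin_lfun_right[OF T1]] by (intro ext) blast
  have "quadrilinear_form s1 s2 s3 s4 Q"
    using T2 bilin_lfun_left[OF T1] lfun_tens_bilin[OF bilin_lfun_right[OF T1]]
    by (auto simp: quadrilinear_form_def Q_def lfun_plain bilin_plain bilinear_form_def)
  from assms[OF this] show "pair_sum xs f = pair_sum ys f" by (simp add: f_eq T_eq)
qed

lemma veq_tens4_pairsI:
  fixes xs :: "(('a::ab_group_add \<times> 'u::ab_group_add) list \<times> ('h::ab_group_add \<times> 'g::ab_group_add) list) list"
  assumes "\<And>Q::'a \<Rightarrow> 'u \<Rightarrow> 'h \<Rightarrow> 'g \<Rightarrow> 'k::field. quadrilinear_form s1 s2 s3 s4 Q \<Longrightarrow>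
     pair_sum xs (\<lambda>zs ws. pair_sum zs (\<lambda>a u. pair_sum ws (Q a u))) =
     pair_sum ys (\<lambda>zs ws. pair_sum zs (\<lambda>a u. pair_sum ws (Q a u)))"
  shows "veq (tens (tens (plainvs s1) (plainvs s2)) (tens (plainvs s3) (plainvs s4))) xs ys"
  unfolding veq_tens_iff
proof (intro allI impI)
  fix f assume f: "bilin (tens (plainvs s1) (plainvs s2)) (tens (plainvs s3) (plainvs s4)) f"
  obtain T where T1: "\<And>ws. bilin (plainvs s1) (plainvs s2) (\<lambda>v w. T v w ws)"
    and T2: "\<And>v w. lfun (tens (plainvs s3) (plainvs s4)) (T v w)"
    and f_eq: "f = (\<lambda>zs ws. pair_sum zs (\<lambda>v w. T v w ws))"
    using bilin_tens_leftE[OF f] by blast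
  define Q where "Q = (\<lambda>v w h g. T v w [(h,g)])"
  have T_eq: "T = (\<lambda>v w ws. pair_sum ws (Q v w))"
    unfolding Q_def using lfun_tens_eq_pair_sum[OF T2] by (intro ext) blast
  have "quadrilinear_form s1 s2 s3 s4 Q"
    using T1 lfun_tens_bilin[OF T2]
    by (auto simp: quadrilinear_form_def Q_def bilin_plain bilinear_form_def)
  from assms[OF this] show "pair_sum xs f = pair_sum ys f" by (simp add: f_eq T_eq)
qed

lemma veq_tens4_middleI:
  fixes xs :: "('h::ab_group_add \<times> (('a::ab_group_add \<times> 'u::ab_group_add) list \<times> 'g::ab_group_add) list) list"
  assumes "\<And>Q::'h \<Rightarrow> 'a \<Rightarrow> 'u \<Rightarrow> 'g \<Rightarrow> 'k::field. quadrilinear_form s1 s2 s3 s4 Q \<Longrightarrow>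
     pair_sum xs (\<lambda>v ys. pair_sum ys (\<lambda>zs g. pair_sum zs (\<lambda>a u. Q v a u g))) =
     pair_sum ys (\<lambda>v ys. pair_sum ys (\<lambda>zs g. pair_sum zs (\<lambda>a u. Q v a u g)))"
  shows "veq (tens (plainvs s1) (tens (tens (plainvs s2) (plainvs s3)) (plainvs s4))) xs ys"
  unfolding veq_tens_iff
proof (intro allI impI)
  fix f assume f: "bilin (plainvs s1) (tens (tens (plainvs s2) (plainvs s3)) (plainvs s4)) f"
  obtain T where T1: "\<And>v. bilin (tens (plainvs s2) (plainvs s3)) (plainvs s4) (T v)"
    and T2: "\<And>zs g. lfun (plainvs s1) (\<lambda>v. T v zs g)" and f_eq: "f = (\<lambda>v ys. pair_sum ys (T v))"
    using bilin_tens_rightE[OF f] by blast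
  define Q where "Q = (\<lambda>v a u g. T v [(a,u)] g)"
  have T_eq: "T = (\<lambda>v zs g. pair_sum zs (\<lambda>a u. Q v a u g))"
    unfolding Q_def using lfun_tens_eq_pair_sum[OF bilin_lfun_left[OF T1]] by (intro ext) blast
  have "quadrilinear_form s1 s2 s3 s4 Q"
    using T2 lfun_tens_bilin[OF bilin_lfun_left[OF T1]] bilin_lfun_right[OF T1]
    by (auto simp: quadrilinear_form_def Q_def lfun_plain bilin_plain bilinear_form_def)
  from assms[OF this] show "pair_sum xs f = pair_sum ys f" by (simp add: f_eq T_eq)
qed

lemma veq_mult_cong_by_tests:
  assumes tests: "\<And>x x'. veq X x x' \<longleftrightarrow> (\<forall>t. P t \<longrightarrow> ev t x = ev t x')"
    and left: "\<And>t y. P t \<Longrightarrow> \<exists>t'. P t' \<and> (\<forall>x. ev t (mul x y) = ev t' x)"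
    and right: "\<And>t x. P t \<Longrightarrow> \<exists>t'. P t' \<and> (\<forall>y. ev t (mul x y) = ev t' y)"
    and x: "veq X x x'" and y: "veq X y y'"
  shows "veq X (mul x y) (mul x' y')"
  unfolding tests
proof (intro allI impI)
  fix t assume t: "P t"
  obtain t1 where "P t1" "\<forall>x. ev t (mul x y) = ev t1 x" using left[OF t] by blast
  with x tests have "ev t (mul x y) = ev t (mul x' y)" by metis
  also obtain t2 where "P t2" "\<forall>y. ev t (mul x' y) = ev t2 y" using right[OF t] by blast
  with y tests have "ev t (mul x' y) = ev t (mul x' y')" by metis
  finally show "ev t (mul x y) = ev t (mul x' y')" .
qed

lemma mult_assoc_transfer:
  assumes "svs Y"
    and cong: "\<And>y1 y1' y2 y2'. veq Y y1 y1' \<Longrightarrow> veq Y y2 y2' \<Longrightarrow> veq Y (mY y1 y2) (mY y1' y2')"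
    and resp: "\<And>x x'. veq X x x' \<Longrightarrow> veq Y (f x) (f x')"
    and mult: "\<And>x x'. veq Y (f (mX x x')) (mY (f x) (f x'))"
    and surj: "\<And>y. \<exists>x. veq Y (f x) y"
    and assoc: "\<And>x1 x2 x3. veq X (mX (mX x1 x2) x3) (mX x1 (mX x2 x3))"
  shows "veq Y (mY (mY y1 y2) y3) (mY y1 (mY y2 y3))"
proof -
  have eqv: "equivp (veq Y)" using \<open>svs Y\<close> by (simp add: svs_def)
  have refl: "veq Y y y" for y using equivp_reflp[OF eqv] .
  have sym: "veq Y y y' \<Longrightarrow> veq Y y' y" for y y' using equivp_symp[OF eqv] .
  have trans[trans]: "veq Y y y' \<Longrightarrow> veq Y y' y'' \<Longrightarrow> veq Y y y''" for y y' y''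
    using equivp_transp[OF eqv] .
  obtain x1 x2 x3 where s1: "veq Y (f x1) y1" and s2: "veq Y (f x2) y2" and s3: "veq Y (f x3) y3"
    using surj[of y1] surj[of y2] surj[of y3] by blast
  have "veq Y (mY (mY y1 y2) y3) (mY (mY (f x1) (f x2)) (f x3))"
    by (rule cong[OF cong[OF sym[OF s1] sym[OF s2]] sym[OF s3]])
  also have "veq Y \<dots> (mY (f (mX x1 x2)) (f x3))"
    by (rule cong[OF sym[OF mult] refl])
  also have "veq Y \<dots> (f (mX (mX x1 x2) x3))"
    by (rule sym[OF mult])
  also have "veq Y \<dots> (f (mX x1 (mX x2 x3)))"
    by (intro resp assoc)
  also have "veq Y \<dots> (mY (f x1) (f (mX x2 x3)))"
    by (rule mult)
  also have "veq Y \<dots> (mY (f x1) (mY (f x2) (f x3)))"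
    by (rule cong[OF refl mult])
  also have "veq Y \<dots> (mY y1 (mY y2 y3))"
    by (rule cong[OF s1 cong[OF s2 s3]])
  finally show ?thesis .
qed

lemma slin_plain_tensI:
  fixes F :: "'x::ab_group_add \<Rightarrow> ('y \<times> 'z) list"
  assumes "\<And>f::'y \<Rightarrow> 'z \<Rightarrow> 'k::field. bilin Y1 Y2 f \<Longrightarrow> linear_form s (\<lambda>x. pair_sum (F x) f)"
  shows "slin (plainvs s) (tens Y1 Y2) F"
  using assms by (auto simp: slin_def veq_tens_iff linear_form_def pair_sum_vsc)

lemma slin_tens2_concat_mapI:
  fixes F :: "('v::ab_group_add \<times> 'w::ab_group_add) list \<Rightarrow> ('y \<times> 'z) list"
  assumes F: "\<And>xs. F xs = concat (map (\<lambda>(a,b). g a b) xs)"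
    and lin: "\<And>f::'y \<Rightarrow> 'z \<Rightarrow> 'k::field. bilin Y1 Y2 f \<Longrightarrow>
      bilinear_form s1 s2 (\<lambda>a b. pair_sum (g a b) f)"
  shows "slin (tens (plainvs s1) (plainvs s2)) (tens Y1 Y2) F"
  unfolding slin_def veq_tens_iff F
proof (intro conjI allI impI)
  fix xs xs' f assume "\<forall>F. bilin (plainvs s1) (plainvs s2) F \<longrightarrow> pair_sum xs F = pair_sum xs' F"
    and "bilin Y1 Y2 f"
  then show "pair_sum (concat (map (\<lambda>(a,b). g a b) xs)) f = pair_sum (concat (map (\<lambda>(a,b). g a b) xs')) f"
    using lin bilin_plain by fastforce
next
  fix c xs f assume f: "bilin Y1 Y2 f"
  have "pair_sum (concat (map (\<lambda>(a,b). g a b) (map (\<lambda>(x,y). (s1 c x, y)) xs))) f =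
        c * pair_sum xs (\<lambda>a b. pair_sum (g a b) f)"
  proof (induction xs)
    case (Cons p xs) then show ?case
      by (cases p) (simp add: bilinear_form_rules[OF lin[OF f]] algebra_simps)
  qed simp
  then show "pair_sum (concat (map (\<lambda>(a,b). g a b) (vsc (tens (plainvs s1) (plainvs s2)) c xs))) f =
        pair_sum (vsc (tens Y1 Y2) c (concat (map (\<lambda>(a,b). g a b) xs))) f"
    by (simp add: pair_sum_vsc[OF f] del: map_map)
qed auto

lemma vector_space_rules:
  assumes "vector_space s"
  shows "s c (x+y) = s c x + s c y" "s (c+d) x = s c x + s d x" "s c (s d x) = s (c*d) x"
    "s 1 x = x" "s 0 x = 0" "s c 0 = 0"
proof -
  interpret vector_space s by (fact assms)
  show "s c (x+y) = s c x + s c y" "s (c+d) x = s c x + s d x" "s c (s d x) = s (c*d) x"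
    "s 1 x = x" "s 0 x = 0" "s c 0 = 0"
    by (simp_all add: scale_right_distrib scale_left_distrib)
qed

lemma add_hom_zero:
  fixes L :: "'a::ab_group_add \<Rightarrow> 'b::ab_group_add"
  assumes "\<And>x y. L (x+y) = L x + L y" shows "L 0 = 0"
  using assms[of 0 0] by simp

lemma slin_pair_sum_rules:
  fixes co :: "'x::ab_group_add \<Rightarrow> ('a::ab_group_add \<times> 'b::ab_group_add) list"
    and G :: "'a \<Rightarrow> 'b \<Rightarrow> 'k::field"
  assumes vs: "vector_space s" and co: "slin (plainvs s) (tens (plainvs s1) (plainvs s2)) co"
    and G: "bilinear_form s1 s2 G"
  shows "pair_sum (co (x+y)) G = pair_sum (co x) G + pair_sum (co y) G"
    "pair_sum (co (s c x)) G = c * pair_sum (co x) G" "pair_sum (co 0) G = 0"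
    "pair_sum (co (pair_sum xs F)) G = pair_sum xs (\<lambda>a b. pair_sum (co (F a b)) G)"
proof -
  have resp: "veq (tens (plainvs s1) (plainvs s2)) ys ys' \<Longrightarrow> pair_sum ys G = pair_sum ys' G" for ys ys'
    using veq_tens2D G by blast
  show add: "pair_sum (co (x+y)) G = pair_sum (co x) G + pair_sum (co y) G" for x y
    using resp[of "co (x+y)" "co x @ co y"] co by (simp add: slin_def)
  show scale: "pair_sum (co (s c x)) G = c * pair_sum (co x) G" for c x
    using resp[of "co (s c x)" "map (\<lambda>(a,b). (s1 c a, b)) (co x)"] co
      pair_sum_vsc[of "plainvs s1" "plainvs s2" G] G
    by (simp add: slin_def bilin_plain)
  show zero: "pair_sum (co 0) G = 0" using scale[of 0 0] vector_space_rules[OF vs] by simp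
  show "pair_sum (co (pair_sum xs F)) G = pair_sum xs (\<lambda>a b. pair_sum (co (F a b)) G)"
    by (rule pair_sum_hom[OF add zero])
qed

locale plain_alg =
  fixes s :: "'k::field \<Rightarrow> 'm::ab_group_add \<Rightarrow> 'm" and m :: "'m \<Rightarrow> 'm \<Rightarrow> 'm" and u :: 'm
  assumes vs: "vector_space s" and sa: "salg (plainvs s) m u"
begin

lemma scale_simps[simp]:
  "s c (x+y) = s c x + s c y" "s (c+d) x = s c x + s d x"
  "s c (s d x) = s (c*d) x" "s 1 x = x" "s 0 x = 0" "s c 0 = 0"
  using vector_space_rules[OF vs] by auto

lemma scale_pair_sum[simp]: "s c (pair_sum xs F) = pair_sum xs (\<lambda>a b. s c (F a b))"
  by (rule pair_sum_hom) auto

lemma mult_simps[simp]: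
  "m (x+y) z = m x z + m y z" "m x (y+z) = m x y + m x z"
  "m (s c x) y = s c (m x y)" "m x (s c y) = s c (m x y)"
  "m (m x y) z = m x (m y z)" "m u x = x" "m x u = x"
  using sa by (auto simp: salg_def)

lemma mult_pair_sum_simps[simp]:
  "m 0 x = 0" "m x 0 = 0"
  "m (pair_sum xs F) y = pair_sum xs (\<lambda>a b. m (F a b) y)"
  "m y (pair_sum xs F) = pair_sum xs (\<lambda>a b. m y (F a b))"
  by (auto intro!: add_hom_zero pair_sum_hom)

end

locale plain_bialgebra =
  fixes H :: "('k::field, 'h::ab_group_add) bialg"
  assumes bialg: "bialgebra H"

locale plain_lcomodalg = plain_alg s m u
  for s :: "'k::field \<Rightarrow> 'm::ab_group_add \<Rightarrow> 'm" and m u +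
  fixes H :: "('k, 'h::ab_group_add) bialg" and co :: "'m \<Rightarrow> ('h \<times> 'm) list"
  assumes lc: "lcomodalg H (plainvs s) m u co"
begin

lemma slin_coact: "slin (plainvs s) (tens (plainvs (hsc H)) (plainvs s)) co"
  using lc by (simp add: lcomodalg_def HV_plain)

lemma coact_linear:
  fixes G :: "'h \<Rightarrow> 'm \<Rightarrow> 'k"
  assumes "bilinear_form (hsc H) s G"
  shows "pair_sum (co (x+y)) G = pair_sum (co x) G + pair_sum (co y) G"
    "pair_sum (co (s c x)) G = c * pair_sum (co x) G"
    "pair_sum (co 0) G = 0"
    "pair_sum (co (pair_sum xs F)) G = pair_sum xs (\<lambda>a b. pair_sum (co (F a b)) G)"
  using slin_pair_sum_rules[OF vs slin_coact assms] by auto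

lemma coact_mult:
  fixes G :: "'h \<Rightarrow> 'm \<Rightarrow> 'k"
  assumes "bilinear_form (hsc H) s G"
  shows "pair_sum (co (m x y)) G =
    pair_sum (co x) (\<lambda>h x'. pair_sum (co y) (\<lambda>g y'. G (hmul H h g) (m x' y')))"
proof -
  have "veq (tens (plainvs (hsc H)) (plainvs s)) (co (m x y))
        [(hmul H h g, m x' y'). (h, x') \<leftarrow> co x, (g, y') \<leftarrow> co y]"
    using lc by (simp add: lcomodalg_def HV_plain)
  from veq_tens2D[OF this assms] show ?thesis by simp
qed

lemma coact_unit:
  fixes G :: "'h \<Rightarrow> 'm \<Rightarrow> 'k"
  assumes "bilinear_form (hsc H) s G"
  shows "pair_sum (co u) G = G (hone H) u"
proof -
  have "veq (tens (plainvs (hsc H)) (plainvs s)) (co u) [(hone H, u)]"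
    using lc by (simp add: lcomodalg_def HV_plain)
  from veq_tens2D[OF this assms] show ?thesis by simp
qed

lemma coact_coassoc:
  fixes T :: "'h \<Rightarrow> 'h \<Rightarrow> 'm \<Rightarrow> 'k"
  assumes "trilinear_form (hsc H) (hsc H) s T"
  shows "pair_sum (co x) (\<lambda>h y. pair_sum (hcom H h) (\<lambda>h1 h2. T h1 h2 y)) =
    pair_sum (co x) (\<lambda>h y. pair_sum (co y) (T h))"
proof -
  have "veq (tens (plainvs (hsc H)) (tens (plainvs (hsc H)) (plainvs s)))
        [(h1, [(h2, y)]). (h, y) \<leftarrow> co x, (h1, h2) \<leftarrow> hcom H h]
        [(h, co y). (h, y) \<leftarrow> co x]"
    using lc by (simp add: lcomodalg_def HV_plain)
  from veq_tens3_rightD[OF this assms] show ?thesis by simp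
qed

lemma coact_counit:
  fixes F :: "'m \<Rightarrow> 'k"
  assumes "linear_form s F"
  shows "pair_sum (co x) (\<lambda>h y. hcou H h * F y) = F x"
proof -
  have "pair_sum (co x) (\<lambda>h y. s (hcou H h) y) = x"
    using lc by (simp add: lcomodalg_def sum_list_pair_sum)
  then have "F x = F (pair_sum (co x) (\<lambda>h y. s (hcou H h) y))" by simp
  also have "\<dots> = pair_sum (co x) (\<lambda>h y. hcou H h * F y)" by (simp add: linear_form_rules[OF assms])
  finally show ?thesis by simp
qed

end

locale plain_rcomodalg = plain_alg s m u
  for s :: "'k::field \<Rightarrow> 'm::ab_group_add \<Rightarrow> 'm" and m u +
  fixes H :: "('k, 'h::ab_group_add) bialg" and rho :: "'m \<Rightarrow> ('m \<times> 'h) list"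
  assumes rc: "rcomodalg H (plainvs s) m u rho"
begin

lemma slin_rho: "slin (plainvs s) (tens (plainvs s) (plainvs (hsc H))) rho"
  using rc by (simp add: rcomodalg_def HV_plain)

lemma rho_linear:
  fixes G :: "'m \<Rightarrow> 'h \<Rightarrow> 'k"
  assumes "bilinear_form s (hsc H) G"
  shows "pair_sum (rho (x+y)) G = pair_sum (rho x) G + pair_sum (rho y) G"
    "pair_sum (rho (s c x)) G = c * pair_sum (rho x) G"
    "pair_sum (rho 0) G = 0"
    "pair_sum (rho (pair_sum xs F)) G = pair_sum xs (\<lambda>a b. pair_sum (rho (F a b)) G)"
  using slin_pair_sum_rules[OF vs slin_rho assms] by auto

lemma rho_mult:
  fixes G :: "'m \<Rightarrow> 'h \<Rightarrow> 'k"
  assumes "bilinear_form s (hsc H) G"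
  shows "pair_sum (rho (m x y)) G =
    pair_sum (rho x) (\<lambda>x' h. pair_sum (rho y) (\<lambda>y' g. G (m x' y') (hmul H h g)))"
proof -
  have "veq (tens (plainvs s) (plainvs (hsc H))) (rho (m x y))
        [(m x' y', hmul H h g). (x', h) \<leftarrow> rho x, (y', g) \<leftarrow> rho y]"
    using rc by (simp add: rcomodalg_def HV_plain)
  from veq_tens2D[OF this assms] show ?thesis by simp
qed

lemma rho_unit:
  fixes G :: "'m \<Rightarrow> 'h \<Rightarrow> 'k"
  assumes "bilinear_form s (hsc H) G"
  shows "pair_sum (rho u) G = G u (hone H)"
proof -
  have "veq (tens (plainvs s) (plainvs (hsc H))) (rho u) [(u, hone H)]"
    using rc by (simp add: rcomodalg_def HV_plain)
  from veq_tens2D[OF this assms] show ?thesis by simp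
qed

lemma rho_coassoc:
  fixes T :: "'m \<Rightarrow> 'h \<Rightarrow> 'h \<Rightarrow> 'k"
  assumes "trilinear_form s (hsc H) (hsc H) T"
  shows "pair_sum (rho x) (\<lambda>y h. pair_sum (hcom H h) (T y)) =
    pair_sum (rho x) (\<lambda>y h. pair_sum (rho y) (\<lambda>y0 y1. T y0 y1 h))"
proof -
  have "veq (tens (plainvs s) (tens (plainvs (hsc H)) (plainvs (hsc H))))
        [(y0, [(y1, h)]). (y, h) \<leftarrow> rho x, (y0, y1) \<leftarrow> rho y]
        [(y, hcom H h). (y, h) \<leftarrow> rho x]"
    using rc by (simp add: rcomodalg_def HV_plain)
  from veq_tens3_rightD[OF this assms] show ?thesis by simp
qed

lemma rho_counit:
  fixes F :: "'m \<Rightarrow> 'k"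
  assumes "linear_form s F"
  shows "pair_sum (rho x) (\<lambda>y h. hcou H h * F y) = F x"
proof -
  have "pair_sum (rho x) (\<lambda>y h. s (hcou H h) y) = x"
    using rc by (simp add: rcomodalg_def sum_list_pair_sum)
  then have "F x = F (pair_sum (rho x) (\<lambda>y h. s (hcou H h) y))" by simp
  also have "\<dots> = pair_sum (rho x) (\<lambda>y h. hcou H h * F y)" by (simp add: linear_form_rules[OF assms])
  finally show ?thesis by simp
qed

end

locale plain_bicomodalg = plain_lcomodalg s m u H lam + plain_rcomodalg s m u H rho
  for s :: "'k::field \<Rightarrow> 'm::ab_group_add \<Rightarrow> 'm" and m u and H :: "('k, 'h::ab_group_add) bialg" and lam rho +
  assumes bc: "bicomodalg H (plainvs s) m u lam rho"
begin

lemma coactions_commute: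
  fixes T :: "'h \<Rightarrow> 'm \<Rightarrow> 'h \<Rightarrow> 'k"
  assumes "trilinear_form (hsc H) s (hsc H) T"
  shows "pair_sum (rho x) (\<lambda>y g. pair_sum (lam y) (\<lambda>h z. T h z g)) =
    pair_sum (lam x) (\<lambda>h y. pair_sum (rho y) (T h))"
proof -
  have "veq (tens (plainvs (hsc H)) (tens (plainvs s) (plainvs (hsc H))))
        [(h, [(z, g)]). (y, g) \<leftarrow> rho x, (h, z) \<leftarrow> lam y]
        [(h, rho y). (h, y) \<leftarrow> lam x]"
    using bc by (simp add: bicomodalg_def HV_plain)
  from veq_tens3_rightD[OF this assms] show ?thesis by simp
qed

end

sublocale plain_bialgebra \<subseteq> H: plain_bicomodalg "hsc H" "hmul H" "hone H" H "hcom H" "hcom H"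
  using bialg
  by unfold_locales
    (auto simp: bialgebra_def bicomodalg_def lcomodalg_def rcomodalg_def HV_plain vector_space_rules)

context plain_bialgebra
begin

lemma linear_form_hcou: "linear_form (hsc H) (hcou H)"
  using bialg by (simp add: bialgebra_def HV_plain lfun_plain)

lemma hcou_simps[simp]:
  "hcou H (x+y) = hcou H x + hcou H y" "hcou H (hsc H c x) = c * hcou H x" "hcou H 0 = 0"
  "hcou H (pair_sum xs F) = pair_sum xs (\<lambda>a b. hcou H (F a b))"
  "hcou H (hmul H x y) = hcou H x * hcou H y" "hcou H (hone H) = 1"
  using linear_form_rules[OF linear_form_hcou] bialg by (auto simp: bialgebra_def)

lemmas hcom_linear = H.coact_linear
  and hcom_mult = H.coact_mult
  and hcom_unit = H.coact_unit
  and hcom_coassoc = H.coact_coassoc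
  and hcom_counit_left = H.coact_counit
  and hcom_counit_right = H.rho_counit

end

locale plain_lmodalg = plain_bialgebra H + plain_alg s m u
  for H :: "('k::field, 'h::ab_group_add) bialg" and s :: "'k \<Rightarrow> 'm::ab_group_add \<Rightarrow> 'm" and m u +
  fixes la :: "'h \<Rightarrow> 'm \<Rightarrow> 'm"
  assumes lm: "lmodalg H (plainvs s) m u la"
begin

lemma lact_simps[simp]:
  "la h (x+y) = la h x + la h y" "la h (s c x) = s c (la h x)"
  "la (h+g) x = la h x + la g x" "la (hsc H c h) x = s c (la h x)"
  "la (hmul H h g) x = la h (la g x)" "la (hone H) x = x"
  "la h (m x y) = pair_sum (hcom H h) (\<lambda>h1 h2. m (la h1 x) (la h2 y))"
  "la h u = s (hcou H h) u"
  using lm by (auto simp: lmodalg_def slin_def HV_plain sum_list_pair_sum)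

lemma lact_pair_sum_simps[simp]:
  "la h 0 = 0" "la 0 x = 0"
  "la h (pair_sum xs F) = pair_sum xs (\<lambda>a b. la h (F a b))"
  "la (pair_sum ys F2) x = pair_sum ys (\<lambda>a b. la (F2 a b) x)"
  by (auto intro!: add_hom_zero pair_sum_hom)

end

locale plain_rmodalg = plain_bialgebra H + plain_alg s m u
  for H :: "('k::field, 'h::ab_group_add) bialg" and s :: "'k \<Rightarrow> 'm::ab_group_add \<Rightarrow> 'm" and m u +
  fixes ra :: "'m \<Rightarrow> 'h \<Rightarrow> 'm"
  assumes rm: "rmodalg H (plainvs s) m u ra"
begin

lemma ract_simps[simp]:
  "ra (x+y) h = ra x h + ra y h" "ra (s c x) h = s c (ra x h)"
  "ra x (h+g) = ra x h + ra x g" "ra x (hsc H c h) = s c (ra x h)"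
  "ra x (hmul H h g) = ra (ra x h) g" "ra x (hone H) = x"
  "ra (m x y) h = pair_sum (hcom H h) (\<lambda>h1 h2. m (ra x h1) (ra y h2))"
  "ra u h = s (hcou H h) u"
  using rm by (auto simp: rmodalg_def slin_def HV_plain sum_list_pair_sum)

lemma ract_pair_sum_simps[simp]:
  "ra 0 h = 0" "ra x 0 = 0"
  "ra (pair_sum xs F) h = pair_sum xs (\<lambda>a b. ra (F a b) h)"
  "ra x (pair_sum ys F2) = pair_sum ys (\<lambda>a b. ra x (F2 a b))"
  by (auto intro!: add_hom_zero pair_sum_hom)

end

locale plain_bimodalg = plain_lmodalg H s m u la + plain_rmodalg H s m u ra
  for H :: "('k::field, 'h::ab_group_add) bialg" and s :: "'k \<Rightarrow> 'm::ab_group_add \<Rightarrow> 'm" and m u la ra +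
  assumes compat: "\<And>h x g. la h (ra x g) = ra (la h x) g"
begin

declare compat[simp]

end

locale plain_ydalg = plain_lmodalg H s m u la + plain_lcomodalg s m u H co
  for H :: "('k::field, 'h::ab_group_add) bialg" and s :: "'k \<Rightarrow> 'm::ab_group_add \<Rightarrow> 'm" and m u la co +
  assumes yd: "ydalg H (plainvs s) m u la co"
begin

lemma yd_compat:
  fixes G :: "'h \<Rightarrow> 'm \<Rightarrow> 'k"
  assumes "bilinear_form (hsc H) s G"
  shows "pair_sum (hcom H h) (\<lambda>h1 h2. pair_sum (co a) (\<lambda>b a0. G (hmul H h1 b) (la h2 a0)))
       = pair_sum (hcom H h) (\<lambda>h1 h2. pair_sum (co (la h1 a)) (\<lambda>c a0. G (hmul H c h2) a0))"
proof -
  have "veq (tens (plainvs (hsc H)) (plainvs s))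
        [(hmul H h1 b, la h2 a0). (h1, h2) \<leftarrow> hcom H h, (b, a0) \<leftarrow> co a]
        [(hmul H c h2, a0). (h1, h2) \<leftarrow> hcom H h, (c, a0) \<leftarrow> co (la h1 a)]"
    using yd by (simp add: ydalg_def HV_plain)
  from veq_tens2D[OF this assms] show ?thesis by simp
qed

lemma yd_compat_iterated:
  fixes Psi :: "'h \<Rightarrow> 'h \<Rightarrow> 'm \<Rightarrow> 'h \<Rightarrow> 'k"
  assumes Psi: "quadrilinear_form (hsc H) (hsc H) s (hsc H) Psi"
  shows "pair_sum (hcom H h) (\<lambda>k1 r1. pair_sum (hcom H r1) (\<lambda>k2 r2. pair_sum (hcom H r2) (\<lambda>k3 k4.
            pair_sum (co (la k2 a)) (\<lambda>c a0. Psi k1 (hmul H c k3) a0 k4)))) =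
         pair_sum (hcom H h) (\<lambda>k1 r1. pair_sum (hcom H r1) (\<lambda>k2 r2. pair_sum (hcom H r2) (\<lambda>k3 k4.
            pair_sum (co a) (\<lambda>b a0. Psi k1 (hmul H k2 b) (la k3 a0) k4))))"
proof (rule pair_sum_ext)
  fix k1 r1
  have "pair_sum (hcom H r1) (\<lambda>k2 r2. pair_sum (hcom H r2) (\<lambda>k3 k4.
          pair_sum (co (la k2 a)) (\<lambda>c a0. Psi k1 (hmul H c k3) a0 k4))) =
        pair_sum (hcom H r1) (\<lambda>r k4. pair_sum (hcom H r) (\<lambda>k2 k3.
          pair_sum (co (la k2 a)) (\<lambda>c a0. Psi k1 (hmul H c k3) a0 k4)))"
    by (rule hcom_coassoc[symmetric]) (simp add: quadrilinear_form_rules[OF Psi] coact_linear multilinear_defs)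
  also have "\<dots> = pair_sum (hcom H r1) (\<lambda>r k4. pair_sum (hcom H r) (\<lambda>k2 k3.
          pair_sum (co a) (\<lambda>b a0. Psi k1 (hmul H k2 b) (la k3 a0) k4)))"
    by (intro pair_sum_ext yd_compat[symmetric]) (simp add: quadrilinear_form_rules[OF Psi] multilinear_defs)
  also have "\<dots> = pair_sum (hcom H r1) (\<lambda>k2 r2. pair_sum (hcom H r2) (\<lambda>k3 k4.
          pair_sum (co a) (\<lambda>b a0. Psi k1 (hmul H k2 b) (la k3 a0) k4)))"
    by (rule hcom_coassoc) (simp add: quadrilinear_form_rules[OF Psi] coact_linear multilinear_defs)
  finally show "pair_sum (hcom H r1) (\<lambda>k2 r2. pair_sum (hcom H r2) (\<lambda>k3 k4.
          pair_sum (co (la k2 a)) (\<lambda>c a0. Psi k1 (hmul H c k3) a0 k4))) =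
        pair_sum (hcom H r1) (\<lambda>k2 r2. pair_sum (hcom H r2) (\<lambda>k3 k4.
          pair_sum (co a) (\<lambda>b a0. Psi k1 (hmul H k2 b) (la k3 a0) k4)))" .
qed

end

lemma plain_bimodalgI:
  "bialgebra H \<Longrightarrow> vector_space s \<Longrightarrow> bimodalg H (plainvs s) m u la ra \<Longrightarrow> plain_bimodalg H s m u la ra"
  by unfold_locales (auto simp: bimodalg_def lmodalg_def rmodalg_def vector_space_rules)

lemma plain_bicomodalgI:
  "vector_space s \<Longrightarrow> bicomodalg H (plainvs s) m u lam rho \<Longrightarrow> plain_bicomodalg s m u H lam rho"
  by unfold_locales (auto simp: bicomodalg_def lcomodalg_def rcomodalg_def vector_space_rules)

lemma plain_ydalgI:
  "bialgebra H \<Longrightarrow> vector_space s \<Longrightarrow> ydalg H (plainvs s) m u la co \<Longrightarrow> plain_ydalg H s m u la co"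
  by unfold_locales (auto simp: ydalg_def lmodalg_def lcomodalg_def vector_space_rules)

section \<open>The generalized smash product\<close>

lemma pair_sum_gsm_mul[simp]:
  "pair_sum (gsm_mul mM mN la co xs ys) F =
     pair_sum xs (\<lambda>p n. pair_sum ys (\<lambda>q n'. pair_sum (co n) (\<lambda>h n0. F (mM p (la h q)) (mN n0 n'))))"
  by (simp add: gsm_mul_def)

locale gen_smash = M: plain_lmodalg H sM mM uM laM + N: plain_lcomodalg sN mN uN H coN
  for H :: "('k::field, 'h::ab_group_add) bialg" and sM :: "'k \<Rightarrow> 'm::ab_group_add \<Rightarrow> 'm" and mM uM laM
   and sN :: "'k \<Rightarrow> 'n::ab_group_add \<Rightarrow> 'n" and mN uN coN
begin

abbreviation "mul \<equiv> gsm_mul mM mN laM coN"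
abbreviation "X \<equiv> tens (plainvs sM) (plainvs sN)"

lemmas smash_simps = N.coact_mult N.coact_coassoc N.coact_unit N.coact_linear multilinear_defs

lemma mul_assoc:
  fixes F :: "'m \<Rightarrow> 'n \<Rightarrow> 'k"
  assumes F: "bilinear_form sM sN F"
  shows "pair_sum (mul (mul x y) z) F = pair_sum (mul x (mul y z)) F"
  apply (simp add: bilinear_form_rules[OF F] smash_simps)
  apply (intro pair_sum_ext)
  subgoal for p n q n'
    apply (simp only: pair_sum_swap[of z])
    apply (simp only: pair_sum_swap[of "coN n'"])
    done
  done

lemma mul_cong:
  assumes "veq X x x'" "veq X y y'"
  shows "veq X (mul x y) (mul x' y')"
proof (rule veq_mult_cong_by_tests[OF veq_tens2_iff _ _ assms])
  fix F :: "'m \<Rightarrow> 'n \<Rightarrow> 'k" and y assume F: "bilinear_form sM sN F"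
  let ?F = "\<lambda>p n. pair_sum y (\<lambda>q n'. pair_sum (coN n) (\<lambda>h n0. F (mM p (laM h q)) (mN n0 n')))"
  have "bilinear_form sM sN ?F" by (simp add: bilinear_form_rules[OF F] smash_simps)
  then show "\<exists>F'. bilinear_form sM sN F' \<and> (\<forall>x. pair_sum (mul x y) F = pair_sum x F')" by auto
next
  fix F :: "'m \<Rightarrow> 'n \<Rightarrow> 'k" and x assume F: "bilinear_form sM sN F"
  let ?F = "\<lambda>q n'. pair_sum x (\<lambda>p n. pair_sum (coN n) (\<lambda>h n0. F (mM p (laM h q)) (mN n0 n')))"
  have "bilinear_form sM sN ?F" by (simp add: bilinear_form_rules[OF F] smash_simps)
  moreover have "pair_sum (mul x y) F = pair_sum y ?F" for y by (simp add: pair_sum_swap[of x])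
  ultimately show "\<exists>F'. bilinear_form sM sN F' \<and> (\<forall>y. pair_sum (mul x y) F = pair_sum y F')" by auto
qed

lemma salg_smash: "salg X mul [(uM,uN)]"
  unfolding salg_def
proof (intro conjI allI impI)
  show "veq X (mul x y) (mul x' y')" if "veq X x x'" "veq X y y'" for x x' y y'
    using mul_cong that .
  show "veq X (mul (mul x y) z) (mul x (mul y z))" for x y z
    by (rule veq_tens2I) (rule mul_assoc)
  show "veq X (mul (vsc X c x) y) (vsc X c (mul x y))" for c x y
    apply (rule veq_tens2I)
    subgoal premises F for F by (simp add: bilinear_form_rules[OF F])
    done
  show "veq X (mul x (vsc X c y)) (vsc X c (mul x y))" for c x y
    apply (rule veq_tens2I)
    subgoal premises F for F by (simp add: bilinear_form_rules[OF F])
    done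
  show "veq X (mul [(uM, uN)] x) x" for x
    apply (rule veq_tens2I)
    subgoal premises F for F by (simp add: bilinear_form_rules[OF F] smash_simps)
    done
  show "veq X (mul x [(uM, uN)]) x" for x
    apply (rule veq_tens2I)
    subgoal premises F for F by (simp add: bilinear_form_rules[OF F] smash_simps N.coact_counit)
    done
qed (rule svs_tens | rule veq_tens2I, simp)+

end

section \<open>The smash product of a bimodule algebra with a Yetter-Drinfeld algebra\<close>

lemma pair_sum_sm_lact[simp]:
  "pair_sum (sm_lact H laP laA h xs) F =
     pair_sum xs (\<lambda>p a. pair_sum (hcom H h) (\<lambda>h1 h2. F (laP h1 p) (laA h2 a)))"
  by (simp add: sm_lact_def)

lemma pair_sum_sm_ract[simp]: "pair_sum (sm_ract raP xs h) F = pair_sum xs (\<lambda>p a. F (raP p h) a)"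
  by (simp add: sm_ract_def)

locale module_smash = P: plain_bimodalg H sP mP uP laP raP + A: plain_ydalg H sA mA uA laA coA
  for H :: "('k::field, 'h::ab_group_add) bialg" and sP :: "'k \<Rightarrow> 'p::ab_group_add \<Rightarrow> 'p" and mP uP laP raP
   and sA :: "'k \<Rightarrow> 'a::ab_group_add \<Rightarrow> 'a" and mA uA laA coA
begin

sublocale G: gen_smash H sP mP uP laP sA mA uA coA by unfold_locales

lemmas smash_simps = G.smash_simps P.hcom_mult P.hcom_unit P.hcom_linear P.hcom_coassoc

abbreviation "PA \<equiv> tens (plainvs sP) (plainvs sA)"
abbreviation "lact \<equiv> sm_lact H laP laA"
abbreviation "ract \<equiv> sm_ract raP"

lemma sm_lact_mult:
  fixes F :: "'p \<Rightarrow> 'a \<Rightarrow> 'k"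
  assumes F: "bilinear_form sP sA F"
  shows "pair_sum (lact h (G.mul x y)) F =
    pair_sum (concat [G.mul (lact h1 x) (lact h2 y). (h1, h2) \<leftarrow> hcom H h]) F"
  apply (simp add: bilinear_form_rules[OF F] smash_simps)
  apply (simp only: pair_sum_swap[where ys=y])
  apply (simp only: pair_sum_swap[where ys=x])
  apply (simp add: bilinear_form_rules[OF F] smash_simps)
  apply (intro pair_sum_ext)
  subgoal for p a q b
  proof -
    have "quadrilinear_form (hsc H) (hsc H) sA (hsc H)
        (\<lambda>k1 x n0 k4. F (mP (laP k1 p) (laP x q)) (mA n0 (laA k4 b)))"
      by (simp add: bilinear_form_rules[OF F] multilinear_defs)
    from A.yd_compat_iterated[OF this, simplified] show ?thesis
      by (simp only: pair_sum_swap[of "coA a"])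
  qed
  done

lemma slin_sm_lact: "slin PA PA (lact h)"
proof (rule slin_tens2_concat_mapI)
  show "lact h xs = concat (map (\<lambda>(p,a). [(laP h1 p, laA h2 a). (h1, h2) \<leftarrow> hcom H h]) xs)" for xs
    by (simp add: sm_lact_def)
  fix f assume "bilin (plainvs sP) (plainvs sA) f"
  then have f: "bilinear_form sP sA f" by (simp add: bilin_plain)
  show "bilinear_form sP sA (\<lambda>p a. pair_sum [(laP h1 p, laA h2 a). (h1, h2) \<leftarrow> hcom H h] f)"
    by (simp add: bilinear_form_rules[OF f] smash_simps)
qed

lemma slin_sm_ract: "slin PA PA (\<lambda>x. ract x h)"
proof (rule slin_tens2_concat_mapI)
  show "ract xs h = concat (map (\<lambda>(p,a). [(raP p h, a)]) xs)" for xs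
    by (induction xs) (auto simp: sm_ract_def)
  fix f assume "bilin (plainvs sP) (plainvs sA) f"
  then have f: "bilinear_form sP sA f" by (simp add: bilin_plain)
  show "bilinear_form sP sA (\<lambda>p a. pair_sum [(raP p h, a)] f)"
    by (simp add: bilinear_form_rules[OF f] smash_simps)
qed

lemma lmodalg_smash: "lmodalg H PA G.mul [(uP,uA)] lact"
  unfolding lmodalg_def HV_plain
proof (intro conjI allI)
  show "slin (plainvs (hsc H)) PA (\<lambda>h. lact h x)" for x
    apply (rule slin_plain_tensI, unfold bilin_plain)
    subgoal premises F for F by (simp add: bilinear_form_rules[OF F] smash_simps)
    done
  show "veq PA (lact (hmul H h g) x) (lact h (lact g x))" for h g x
    apply (rule veq_tens2I)
    subgoal premises F for F
      by (simp add: bilinear_form_rules[OF F] smash_simps) (intro pair_sum_ext pair_sum_swap)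
    done
  show "veq PA (lact (hone H) x) x" for x
    apply (rule veq_tens2I)
    subgoal premises F for F by (simp add: bilinear_form_rules[OF F] smash_simps)
    done
  show "veq PA (lact h (G.mul x y)) (vsum PA [G.mul (lact h1 x) (lact h2 y). (h1, h2) \<leftarrow> hcom H h])"
    for h x y
    using sm_lact_mult[of _ h x y] by (intro veq_tens2I) simp
  show "veq PA (lact h [(uP, uA)]) (vsc PA (hcou H h) [(uP, uA)])" for h
    apply (rule veq_tens2I)
    subgoal premises F for F by (simp add: bilinear_form_rules[OF F] smash_simps P.hcom_counit_left)
    done
qed (rule G.salg_smash slin_sm_lact)+

lemma rmodalg_smash: "rmodalg H PA G.mul [(uP,uA)] ract"
  unfolding rmodalg_def HV_plain
proof (intro conjI allI)
  show "slin (plainvs (hsc H)) PA (ract x)" for x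
    apply (rule slin_plain_tensI, unfold bilin_plain)
    subgoal premises F for F by (simp add: bilinear_form_rules[OF F] smash_simps)
    done
  show "veq PA (ract x (hmul H h g)) (ract (ract x h) g)" for h g x
    by (rule veq_tens2I) simp
  show "veq PA (ract x (hone H)) x" for x
    by (rule veq_tens2I) simp
  show "veq PA (ract (G.mul x y) h) (vsum PA [G.mul (ract x h1) (ract y h2). (h1, h2) \<leftarrow> hcom H h])"
    for h x y
    apply (rule veq_tens2I)
    subgoal premises F for F
      by (simp add: bilinear_form_rules[OF F] smash_simps) (simp only: pair_sum_swap[of "hcom H h"])
    done
  show "veq PA (ract [(uP, uA)] h) (vsc PA (hcou H h) [(uP, uA)])" for h
    apply (rule veq_tens2I)
    subgoal premises F for F by (simp add: bilinear_form_rules[OF F])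
    done
qed (rule G.salg_smash slin_sm_ract)+

lemma bimodalg_smash: "bimodalg H PA G.mul [(uP,uA)] lact ract"
  unfolding bimodalg_def
  using lmodalg_smash rmodalg_smash by (auto intro!: veq_tens2I)

end

section \<open>The smash product of a Yetter-Drinfeld algebra with a bicomodule algebra\<close>

lemma pair_sum_sm_lco[simp]:
  "pair_sum (sm_lco H coA lam xs) F =
     pair_sum xs (\<lambda>a u. pair_sum (coA a) (\<lambda>b a0. pair_sum (lam u) (\<lambda>h u0. F (hmul H b h) [(a0,u0)])))"
  by (simp add: sm_lco_def)
lemma pair_sum_sm_rco[simp]:
  "pair_sum (sm_rco rho xs) F = pair_sum xs (\<lambda>a u. pair_sum (rho u) (\<lambda>u0 g. F [(a,u0)] g))"
  by (simp add: sm_rco_def)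

locale comodule_smash = A: plain_ydalg H sA mA uA laA coA + U: plain_bicomodalg sU mU uU H lamU rhoU
  for H :: "('k::field, 'h::ab_group_add) bialg" and sA :: "'k \<Rightarrow> 'a::ab_group_add \<Rightarrow> 'a" and mA uA laA coA
   and sU :: "'k \<Rightarrow> 'u::ab_group_add \<Rightarrow> 'u" and mU uU lamU rhoU
begin

sublocale G: gen_smash H sA mA uA laA sU mU uU lamU by unfold_locales

lemmas smash_simps = G.smash_simps A.hcom_mult A.hcom_unit A.hcom_linear A.hcom_coassoc
  A.coact_mult A.coact_linear A.coact_coassoc A.coact_unit
  U.rho_mult U.rho_linear U.rho_coassoc U.rho_unit U.coactions_commute

abbreviation "AU \<equiv> tens (plainvs sA) (plainvs sU)"
abbreviation "lco \<equiv> sm_lco H coA lamU"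
abbreviation "rco \<equiv> sm_rco rhoU"

lemma yd_compat_lcoact:
  fixes Psi :: "'h \<Rightarrow> 'a \<Rightarrow> 'u \<Rightarrow> 'k"
  assumes Psi: "trilinear_form (hsc H) sA sU Psi"
  shows "pair_sum (lamU n) (\<lambda>h n0. pair_sum (coA (laA h q)) (\<lambda>c a0.
           pair_sum (lamU n0) (\<lambda>h' m. Psi (hmul H c h') a0 m))) =
         pair_sum (lamU n) (\<lambda>h n0. pair_sum (coA q) (\<lambda>b a0.
           pair_sum (lamU n0) (\<lambda>h' m. Psi (hmul H h b) (laA h' a0) m)))"
proof -
  have "pair_sum (lamU n) (\<lambda>h n0. pair_sum (coA (laA h q)) (\<lambda>c a0.
          pair_sum (lamU n0) (\<lambda>h' m. Psi (hmul H c h') a0 m))) =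
        pair_sum (lamU n) (\<lambda>h n0. pair_sum (lamU n0) (\<lambda>h' m.
          pair_sum (coA (laA h q)) (\<lambda>c a0. Psi (hmul H c h') a0 m)))"
    by (intro pair_sum_ext pair_sum_swap)
  also have "\<dots> = pair_sum (lamU n) (\<lambda>k m. pair_sum (hcom H k) (\<lambda>h h'.
          pair_sum (coA (laA h q)) (\<lambda>c a0. Psi (hmul H c h') a0 m)))"
    by (rule U.coact_coassoc[symmetric]) (simp add: trilinear_form_rules[OF Psi] smash_simps)
  also have "\<dots> = pair_sum (lamU n) (\<lambda>k m. pair_sum (hcom H k) (\<lambda>h h'.
          pair_sum (coA q) (\<lambda>b a0. Psi (hmul H h b) (laA h' a0) m)))"
    by (intro pair_sum_ext A.yd_compat[symmetric]) (simp add: trilinear_form_rules[OF Psi] multilinear_defs)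
  also have "\<dots> = pair_sum (lamU n) (\<lambda>h n0. pair_sum (lamU n0) (\<lambda>h' m.
          pair_sum (coA q) (\<lambda>b a0. Psi (hmul H h b) (laA h' a0) m)))"
    by (rule U.coact_coassoc) (simp add: trilinear_form_rules[OF Psi] smash_simps)
  also have "\<dots> = pair_sum (lamU n) (\<lambda>h n0. pair_sum (coA q) (\<lambda>b a0.
          pair_sum (lamU n0) (\<lambda>h' m. Psi (hmul H h b) (laA h' a0) m)))"
    by (intro pair_sum_ext pair_sum_swap)
  finally show ?thesis .
qed

lemma sm_lco_mult:
  "veq (tens (HV H) AU) (lco (G.mul x y))
     [(hmul H h g, G.mul x' y'). (h, x') \<leftarrow> lco x, (g, y') \<leftarrow> lco y]"
  unfolding HV_plain
  apply (rule veq_tens3_rightI)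
  subgoal premises T for T
    apply (simp add: trilinear_form_rules[OF T] smash_simps)
    apply (simp only: pair_sum_swap[where ys=y])
    apply (intro pair_sum_ext)
    subgoal for q n' p n
      apply (simp only: pair_sum_swap[where ys="coA p"])
      apply (rule pair_sum_ext)
      subgoal for h x'
      proof -
        have "trilinear_form (hsc H) sA sU (\<lambda>z a0 m. pair_sum (lamU n') (\<lambda>g y'.
            T (hmul H h (hmul H z g)) (mA x' a0) (mU m y')))"
          by (simp add: trilinear_form_rules[OF T] smash_simps)
        from yd_compat_lcoact[OF this, simplified] show ?thesis
          by (simp only: pair_sum_swap[of "lamU n'"])
      qed
      done
    done
  done

lemma slin_sm_lco: "slin AU (tens (HV H) AU) lco"
  unfolding HV_plain
proof (rule slin_tens2_concat_mapI)
  show "lco xs = concat (map (\<lambda>(a,u). [(hmul H b h, [(a0, u0)]). (b, a0) \<leftarrow> coA a, (h, u0) \<leftarrow> lamU u]) xs)"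
    for xs by (simp add: sm_lco_def)
  fix f assume "bilin (plainvs (hsc H)) AU f"
  then obtain T where T: "trilinear_form (hsc H) sA sU T" and f: "f = (\<lambda>v zs. pair_sum zs (T v))"
    by (elim bilin_tens3_rightE)
  show "bilinear_form sA sU
      (\<lambda>a u. pair_sum [(hmul H b h, [(a0, u0)]). (b, a0) \<leftarrow> coA a, (h, u0) \<leftarrow> lamU u] f)"
    by (simp add: f trilinear_form_rules[OF T] smash_simps)
qed

lemma sm_lco_coassoc: "veq (tens (HV H) (tens (HV H) AU))
        [(h1, [(h2, y)]). (h, y) \<leftarrow> lco x, (h1, h2) \<leftarrow> hcom H h]
        [(h, lco y). (h, y) \<leftarrow> lco x]"
  unfolding HV_plain
  apply (rule veq_tens4_rightI)
  subgoal premises Q for Q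
    apply (simp add: quadrilinear_form_rules[OF Q] smash_simps)
    apply (rule pair_sum_ext)
    subgoal for a u
      apply (simp only: pair_sum_swap[of "lamU u"])
      apply (simp add: quadrilinear_form_rules[OF Q] smash_simps)
      done
    done
  done

lemma sm_lco_counit: "veq AU (vsum AU [vsc AU (hcou H h) y. (h, y) \<leftarrow> lco x]) x"
  apply (rule veq_tens2I)
  subgoal premises F for F
    by (simp add: bilinear_form_rules[OF F] smash_simps A.coact_counit U.coact_counit mult.assoc)
  done

lemma sm_lco_unit: "veq (tens (HV H) AU) (lco [(uA, uU)]) [(hone H, [(uA, uU)])]"
  unfolding HV_plain
  apply (rule veq_tens3_rightI)
  subgoal premises T for T by (simp add: trilinear_form_rules[OF T] smash_simps)
  done

lemma slin_sm_rco: "slin AU (tens AU (HV H)) rco"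
  unfolding HV_plain
proof (rule slin_tens2_concat_mapI)
  show "rco xs = concat (map (\<lambda>(a,u). [([(a, u0)], g). (u0, g) \<leftarrow> rhoU u]) xs)" for xs
    by (simp add: sm_rco_def)
  fix f assume "bilin AU (plainvs (hsc H)) f"
  then obtain T where T: "trilinear_form sA sU (hsc H) T"
    and f: "f = (\<lambda>zs x. pair_sum zs (\<lambda>v w. T v w x))"
    by (elim bilin_tens3_leftE)
  show "bilinear_form sA sU (\<lambda>a u. pair_sum [([(a, u0)], g). (u0, g) \<leftarrow> rhoU u] f)"
    by (simp add: f trilinear_form_rules[OF T] smash_simps)
qed

lemma sm_rco_coassoc: "veq (tens AU (tens (HV H) (HV H)))
        [(y0, [(y1, h)]). (y, h) \<leftarrow> rco x, (y0, y1) \<leftarrow> rco y]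
        [(y, hcom H h). (y, h) \<leftarrow> rco x]"
  unfolding HV_plain
  apply (rule veq_tens4_pairsI)
  subgoal premises Q for Q
    by (simp add: quadrilinear_form_rules[OF Q] smash_simps)
  done

lemma sm_rco_counit: "veq AU (vsum AU [vsc AU (hcou H h) y. (y, h) \<leftarrow> rco x]) x"
  apply (rule veq_tens2I)
  subgoal premises F for F
    by (simp add: bilinear_form_rules[OF F] smash_simps U.rho_counit)
  done

lemma sm_rco_mult:
  "veq (tens AU (HV H)) (rco (G.mul x y))
     [(G.mul x' y', hmul H h g). (x', h) \<leftarrow> rco x, (y', g) \<leftarrow> rco y]"
  unfolding HV_plain
  apply (rule veq_tens3_leftI)
  subgoal premises T for T
    apply (simp add: trilinear_form_rules[OF T] smash_simps)
    apply (simp only: pair_sum_swap[where ys=y])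
    apply (intro pair_sum_ext)
    subgoal for q n' p n
      apply (simp only: pair_sum_swap[of "rhoU n'"])
      apply (simp add: trilinear_form_rules[OF T] smash_simps)
      done
    done
  done

lemma sm_rco_unit: "veq (tens AU (HV H)) (rco [(uA, uU)]) [([(uA, uU)], hone H)]"
  unfolding HV_plain
  apply (rule veq_tens3_leftI)
  subgoal premises T for T by (simp add: trilinear_form_rules[OF T] smash_simps)
  done

lemma sm_coactions_commute: "veq (tens (HV H) (tens AU (HV H)))
        [(h, [(z, g)]). (y, g) \<leftarrow> rco x, (h, z) \<leftarrow> lco y]
        [(h, rco y). (h, y) \<leftarrow> lco x]"
  unfolding HV_plain
  apply (rule veq_tens4_middleI)
  subgoal premises Q for Q
    apply (simp add: quadrilinear_form_rules[OF Q] smash_simps)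
    apply (rule pair_sum_ext)
    subgoal for a u
      apply (simp only: pair_sum_swap[where ys="coA a"])
      apply (simp add: quadrilinear_form_rules[OF Q] smash_simps)
      done
    done
  done

lemma bicomodalg_smash: "bicomodalg H AU G.mul [(uA,uU)] lco rco"
  unfolding bicomodalg_def lcomodalg_def rcomodalg_def
  using G.salg_smash slin_sm_lco sm_lco_coassoc sm_lco_counit sm_lco_mult sm_lco_unit
    slin_sm_rco sm_rco_coassoc sm_rco_counit sm_rco_mult sm_rco_unit sm_coactions_commute
  by blast

end

section \<open>Reassociating the two L-R-smash products\<close>

lemma pair_sum_lr_mul[simp]:
  "pair_sum (lr_mul mB mU laB raB lam rho xs ys) F =
     pair_sum xs (\<lambda>p u. pair_sum ys (\<lambda>q u'. pair_sum (rho u') (\<lambda>u0' g. pair_sum (lam u) (\<lambda>h u0.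
       F (mB (raB p g) (laB h q)) (mU u0 u0')))))"
  by (simp add: lr_mul_def)

lemma pair_sum_reassoc[simp]:
  "pair_sum (reassoc xs) F = pair_sum xs (\<lambda>ys u. pair_sum ys (\<lambda>p a. F p [(a,u)]))"
  by (simp add: reassoc_def)

lemma slin_reassoc:
  "slin (tens (tens (plainvs sP) (plainvs sA)) (plainvs sU))
     (tens (plainvs sP) (tens (plainvs sA) (plainvs sU))) reassoc"
  unfolding slin_def
proof (intro conjI allI impI)
  fix x x' assume "veq (tens (tens (plainvs sP) (plainvs sA)) (plainvs sU)) x x'"
  then show "veq (tens (plainvs sP) (tens (plainvs sA) (plainvs sU))) (reassoc x) (reassoc x')"
    by (intro veq_tens3_rightI) (simp add: veq_tens3_leftD)
next
  fix c x
  show "veq (tens (plainvs sP) (tens (plainvs sA) (plainvs sU)))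
      (reassoc (vsc (tens (tens (plainvs sP) (plainvs sA)) (plainvs sU)) c x))
      (vsc (tens (plainvs sP) (tens (plainvs sA) (plainvs sU))) c (reassoc x))"
    apply (rule veq_tens3_rightI)
    subgoal premises T for T by (simp add: trilinear_form_rules[OF T])
    done
qed (rule veq_tens3_rightI, simp)

lemma reassoc_reflects_veq:
  "veq (tens (plainvs sP) (tens (plainvs sA) (plainvs sU))) (reassoc x) (reassoc x') \<Longrightarrow>
    veq (tens (tens (plainvs sP) (plainvs sA)) (plainvs sU)) x x'"
  by (intro veq_tens3_leftI) (drule veq_tens3_rightD, assumption, simp)

definition unreassoc :: "('p \<times> ('a \<times> 'u) list) list \<Rightarrow> (('p \<times> 'a) list \<times> 'u) list" where
  "unreassoc y = concat (map (\<lambda>(p,zs). map (\<lambda>(a,u). ([(p,a)],u)) zs) y)"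

lemma reassoc_unreassoc:
  "veq (tens (plainvs sP) (tens (plainvs sA) (plainvs sU))) (reassoc (unreassoc y)) y"
  by (rule veq_tens3_rightI) (simp add: unreassoc_def)

locale lr_smash_reassoc =
  p1: module_smash H sP mP uP laP raP sA mA uA laA coA +
  p2: comodule_smash H sA mA uA laA coA sU mU uU lamU rhoU
  for H :: "('k::field, 'h::ab_group_add) bialg" and sP :: "'k \<Rightarrow> 'p::ab_group_add \<Rightarrow> 'p" and mP uP laP raP
   and sA :: "'k \<Rightarrow> 'a::ab_group_add \<Rightarrow> 'a" and mA uA laA coA
   and sU :: "'k \<Rightarrow> 'u::ab_group_add \<Rightarrow> 'u" and mU uU lamU rhoU
begin

lemmas smash_simps = p1.smash_simps p2.smash_simps p1.P.hcom_mult

abbreviation "XL \<equiv> tens (tens (plainvs sP) (plainvs sA)) (plainvs sU)"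
abbreviation "XR \<equiv> tens (plainvs sP) (tens (plainvs sA) (plainvs sU))"
abbreviation "mul_L \<equiv> lr_mul p1.G.mul mU p1.lact p1.ract lamU rhoU"
abbreviation "mul_R \<equiv> lr_mul mP p2.G.mul laP raP p2.lco p2.rco"

text \<open>Pulling sums over comultiplications outwards first, then those over left coactions of
  U, then those over the coaction of A, brings iterated sums close to a normal form.\<close>

lemma pair_sum_pull_hcom:
  "NO_MATCH (hcom H z) B \<Longrightarrow>
    pair_sum B (\<lambda>c d. pair_sum (hcom H a) (\<lambda>x y. F c d x y)) =
    pair_sum (hcom H a) (\<lambda>x y. pair_sum B (\<lambda>c d. F c d x y))"
  by (rule pair_sum_swap)

lemma pair_sum_pull_lam:
  "NO_MATCH (hcom H z) B \<Longrightarrow> NO_MATCH (lamU z2) B \<Longrightarrow>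
    pair_sum B (\<lambda>c d. pair_sum (lamU a) (\<lambda>x y. F c d x y)) =
    pair_sum (lamU a) (\<lambda>x y. pair_sum B (\<lambda>c d. F c d x y))"
  by (rule pair_sum_swap)

lemma pair_sum_pull_coact:
  "NO_MATCH (hcom H z) B \<Longrightarrow> NO_MATCH (lamU z2) B \<Longrightarrow> NO_MATCH (coA z3) B \<Longrightarrow>
    pair_sum B (\<lambda>c d. pair_sum (coA a) (\<lambda>x y. F c d x y)) =
    pair_sum (coA a) (\<lambda>x y. pair_sum B (\<lambda>c d. F c d x y))"
  by (rule pair_sum_swap)

lemmas pair_sum_pulls = pair_sum_pull_hcom pair_sum_pull_lam pair_sum_pull_coact

lemma sm_lact_mult_in_context:
  assumes T: "trilinear_form sP sA sU T"
  shows "pair_sum (p1.G.mul X (p1.lact h (p1.G.mul Y Z))) (\<lambda>v w. T v w u) =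
    pair_sum (p1.G.mul X (concat [p1.G.mul (p1.lact h1 Y) (p1.lact h2 Z). (h1,h2) \<leftarrow> hcom H h]))
      (\<lambda>v w. T v w u)"
proof -
  have "veq p1.PA (p1.lact h (p1.G.mul Y Z))
      (vsum p1.PA [p1.G.mul (p1.lact h1 Y) (p1.lact h2 Z). (h1, h2) \<leftarrow> hcom H h])"
    using p1.lmodalg_smash by (simp add: lmodalg_def)
  then have "veq p1.PA (p1.G.mul X (p1.lact h (p1.G.mul Y Z)))
      (p1.G.mul X (concat [p1.G.mul (p1.lact h1 Y) (p1.lact h2 Z). (h1,h2) \<leftarrow> hcom H h]))"
    by (intro p1.G.mul_cong veq_tens_refl) simp
  moreover have "bilinear_form sP sA (\<lambda>v w. T v w u)"
    using T by (simp add: trilinear_form_def bilinear_form_def)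
  ultimately show ?thesis by (rule veq_tens2D)
qed

text \<open>After expansion both sides are the same iterated sum up to the order of summation; the
  remaining steps only interchange independent sums.\<close>

lemma mul_left_assoc: "veq XL (mul_L (mul_L x y) z) (mul_L x (mul_L y z))"
  apply (rule veq_tens3_leftI)
  subgoal premises T for T
    apply (simp only: pair_sum_lr_mul)
    apply (simp only: sm_lact_mult_in_context[OF T])
    apply (simp add: trilinear_form_rules[OF T] smash_simps)
    apply (simp only: pair_sum_swap[where ys=z])
    apply (simp only: pair_sum_swap[where ys=y])
    apply (simp only: pair_sum_swap[where ys=x])
    apply (intro pair_sum_ext)
    subgoal for zs1 u1 zs2 u2 zs3 u3
      apply (simp only: pair_sum_swap[where ys=zs3])
      apply (simp only: pair_sum_swap[where ys=zs2])
      apply (simp only: pair_sum_swap[where ys=zs1])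
      apply (intro pair_sum_ext)
      subgoal for p1 a1 p2 a2 p3 a3
        apply (simp add: trilinear_form_rules[OF T] smash_simps pair_sum_pulls)
        apply (simp only: pair_sum_swap[where ys="lamU u1"])
        apply (rule pair_sum_ext)
        subgoal for k1 r1
          apply (simp only: pair_sum_swap[where ys="lamU r1"])
          apply (rule pair_sum_ext)
          subgoal for k2 r2
            apply (simp only: pair_sum_swap[where ys="lamU r2"])
            apply (rule pair_sum_ext)
            subgoal for k3 r3
              apply (simp only: pair_sum_swap[where ys="lamU r3"])
              apply (intro pair_sum_ext)
              subgoal for k4 r4 g s1 y2 s2
                apply (simp only: pair_sum_swap[where ys="coA a1"])
                apply (rule pair_sum_ext)
                subgoal for c1 n1
                  apply (simp only: pair_sum_swap[where ys="coA n1"])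
                  apply (intro pair_sum_ext)
                  apply (simp only: pair_sum_swap[where ys="rhoU u3"])
                  done
                done
              done
            done
          done
        done
      done
    done
  done

lemma reassoc_mult: "veq XR (reassoc (mul_L x y)) (mul_R (reassoc x) (reassoc y))"
  apply (rule veq_tens3_rightI)
  subgoal premises T for T
    apply (simp add: trilinear_form_rules[OF T] smash_simps)
    apply (simp only: pair_sum_swap[where ys=y])
    apply (simp only: pair_sum_swap[where ys=x])
    apply (intro pair_sum_ext)
    subgoal for zs1 u1 zs2 u2
      apply (simp only: pair_sum_swap[where ys=zs2])
      apply (simp only: pair_sum_swap[where ys=zs1])
      apply (intro pair_sum_ext)
      subgoal for p1 a1 p2 a2
        by (simp add: trilinear_form_rules[OF T] smash_simps pair_sum_pulls)
      done
    done
  done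

lemma mul_left_cong:
  assumes "veq XL x x'" "veq XL y y'"
  shows "veq XL (mul_L x y) (mul_L x' y')"
proof (rule veq_mult_cong_by_tests[OF veq_tens3_left_iff _ _ assms])
  fix T :: "'p \<Rightarrow> 'a \<Rightarrow> 'u \<Rightarrow> 'k" and y assume T: "trilinear_form sP sA sU T"
  define F where "F = (\<lambda>p a u. pair_sum y (\<lambda>q u'. pair_sum (rhoU u') (\<lambda>u0' g. pair_sum (lamU u)
    (\<lambda>h u0. pair_sum q (\<lambda>pa aa. pair_sum (hcom H h) (\<lambda>h1 h2. pair_sum (coA a) (\<lambda>c n0.
      T (mP (raP p g) (laP c (laP h1 pa))) (mA n0 (laA h2 aa)) (mU u0 u0'))))))))"
  have "pair_sum (mul_L x y) (\<lambda>zs u. pair_sum zs (\<lambda>v w. T v w u)) =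
      pair_sum x (\<lambda>zs u. pair_sum zs (\<lambda>p a. F p a u))" for x
    apply (simp add: trilinear_form_rules[OF T] smash_simps)
    apply (rule pair_sum_ext)
    subgoal for zs u by (simp only: pair_sum_swap[where ys=zs]) (simp add: F_def)
    done
  moreover have "trilinear_form sP sA sU F"
    unfolding F_def by (simp add: trilinear_form_rules[OF T] smash_simps)
  ultimately show "\<exists>T'. trilinear_form sP sA sU T' \<and> (\<forall>x.
      pair_sum (mul_L x y) (\<lambda>zs u. pair_sum zs (\<lambda>v w. T v w u)) =
      pair_sum x (\<lambda>zs u. pair_sum zs (\<lambda>v w. T' v w u)))" by blast
next
  fix T :: "'p \<Rightarrow> 'a \<Rightarrow> 'u \<Rightarrow> 'k" and x assume T: "trilinear_form sP sA sU T"
  define F where "F = (\<lambda>q b v. pair_sum x (\<lambda>zs w. pair_sum (rhoU v) (\<lambda>v0 g. pair_sum (lamU w)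
    (\<lambda>h w0. pair_sum zs (\<lambda>p a. pair_sum (hcom H h) (\<lambda>h1 h2. pair_sum (coA a) (\<lambda>c a0.
      T (mP (raP p g) (laP c (laP h1 q))) (mA a0 (laA h2 b)) (mU w0 v0))))))))"
  have "pair_sum (mul_L x y) (\<lambda>zs u. pair_sum zs (\<lambda>v w. T v w u)) =
      pair_sum y (\<lambda>zs u. pair_sum zs (\<lambda>p a. F p a u))" for y
    apply (simp add: trilinear_form_rules[OF T] smash_simps)
    apply (simp only: pair_sum_swap[where ys=y])
    apply (rule pair_sum_ext)
    subgoal for zs u by (simp only: pair_sum_swap[where ys=zs]) (simp add: F_def)
    done
  moreover have "trilinear_form sP sA sU F"
    unfolding F_def by (simp add: trilinear_form_rules[OF T] smash_simps)
  ultimately show "\<exists>T'. trilinear_form sP sA sU T' \<and> (\<forall>y.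
      pair_sum (mul_L x y) (\<lambda>zs u. pair_sum zs (\<lambda>v w. T v w u)) =
      pair_sum y (\<lambda>zs u. pair_sum zs (\<lambda>v w. T' v w u)))" by blast
qed

lemma mul_right_cong:
  assumes "veq XR x x'" "veq XR y y'"
  shows "veq XR (mul_R x y) (mul_R x' y')"
proof (rule veq_mult_cong_by_tests[OF veq_tens3_right_iff _ _ assms])
  fix T :: "'p \<Rightarrow> 'a \<Rightarrow> 'u \<Rightarrow> 'k" and y assume T: "trilinear_form sP sA sU T"
  define F where "F = (\<lambda>p a u. pair_sum y (\<lambda>q ws. pair_sum ws (\<lambda>b v. pair_sum (rhoU v)
    (\<lambda>v0 g. pair_sum (coA a) (\<lambda>c a0. pair_sum (lamU u) (\<lambda>h w. pair_sum (lamU w) (\<lambda>h' w0.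
      T (mP (raP p g) (laP c (laP h q))) (mA a0 (laA h' b)) (mU w0 v0))))))))"
  have "pair_sum (mul_R x y) (\<lambda>p zs. pair_sum zs (T p)) = pair_sum x (\<lambda>p zs. pair_sum zs (F p))" for x
    apply (simp add: trilinear_form_rules[OF T] smash_simps)
    apply (rule pair_sum_ext)
    subgoal for p zs by (simp only: pair_sum_swap[where ys=zs]) (simp add: F_def)
    done
  moreover have "trilinear_form sP sA sU F"
    unfolding F_def by (simp add: trilinear_form_rules[OF T] smash_simps)
  ultimately show "\<exists>T'. trilinear_form sP sA sU T' \<and> (\<forall>x.
      pair_sum (mul_R x y) (\<lambda>p zs. pair_sum zs (T p)) = pair_sum x (\<lambda>p zs. pair_sum zs (T' p)))"
    by blast
next
  fix T :: "'p \<Rightarrow> 'a \<Rightarrow> 'u \<Rightarrow> 'k" and x assume T: "trilinear_form sP sA sU T"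
  define F where "F = (\<lambda>q b v. pair_sum x (\<lambda>p zs. pair_sum (rhoU v) (\<lambda>v0 g. pair_sum zs
    (\<lambda>a u. pair_sum (coA a) (\<lambda>c a0. pair_sum (lamU u) (\<lambda>h w. pair_sum (lamU w) (\<lambda>h' w0.
      T (mP (raP p g) (laP c (laP h q))) (mA a0 (laA h' b)) (mU w0 v0))))))))"
  have "pair_sum (mul_R x y) (\<lambda>p zs. pair_sum zs (T p)) = pair_sum y (\<lambda>p zs. pair_sum zs (F p))" for y
    apply (simp add: trilinear_form_rules[OF T] smash_simps)
    apply (simp only: pair_sum_swap[where ys=y])
    apply (rule pair_sum_ext)
    subgoal for p zs by (simp only: pair_sum_swap[where ys=zs]) (simp add: F_def)
    done
  moreover have "trilinear_form sP sA sU F"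
    unfolding F_def by (simp add: trilinear_form_rules[OF T] smash_simps)
  ultimately show "\<exists>T'. trilinear_form sP sA sU T' \<and> (\<forall>y.
      pair_sum (mul_R x y) (\<lambda>p zs. pair_sum zs (T p)) = pair_sum y (\<lambda>p zs. pair_sum zs (T' p)))"
    by blast
qed

lemmas counit_simps = p1.P.hcom_counit_left p1.P.hcom_counit_right
  p1.A.coact_counit p2.U.coact_counit p2.U.rho_counit

lemma salg_left: "salg XL mul_L [([(uP,uA)],uU)]"
  unfolding salg_def
proof (intro conjI allI impI)
  show "svs XL" by (rule svs_tens)
  show "veq XL (mul_L x y) (mul_L x' y')" if "veq XL x x'" "veq XL y y'" for x x' y y'
    using mul_left_cong that .
  show "veq XL (mul_L (vadd XL x y) z) (vadd XL (mul_L x z) (mul_L y z))" for x y z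
    by (rule veq_tens3_leftI) simp
  show "veq XL (mul_L x (vadd XL y z)) (vadd XL (mul_L x y) (mul_L x z))" for x y z
    by (rule veq_tens3_leftI) simp
  show "veq XL (mul_L (vsc XL c x) y) (vsc XL c (mul_L x y))" for c x y
    apply (rule veq_tens3_leftI)
    subgoal premises T for T
      by (simp add: trilinear_form_rules[OF T] smash_simps)
    done
  show "veq XL (mul_L x (vsc XL c y)) (vsc XL c (mul_L x y))" for c x y
    apply (rule veq_tens3_leftI)
    subgoal premises T for T
      by (simp add: trilinear_form_rules[OF T] smash_simps)
    done
  show "veq XL (mul_L (mul_L x y) z) (mul_L x (mul_L y z))" for x y z by (rule mul_left_assoc)
  show "veq XL (mul_L [([(uP, uA)], uU)] x) x" for x
    apply (rule veq_tens3_leftI)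
    subgoal premises T for T
      by (simp add: trilinear_form_rules[OF T] smash_simps counit_simps mult.assoc distrib_left)
    done
  show "veq XL (mul_L x [([(uP, uA)], uU)]) x" for x
    apply (rule veq_tens3_leftI)
    subgoal premises T for T
      by (simp add: trilinear_form_rules[OF T] smash_simps counit_simps mult.assoc distrib_left)
    done
qed

lemma mul_right_assoc: "veq XR (mul_R (mul_R y1 y2) y3) (mul_R y1 (mul_R y2 y3))"
proof (rule mult_assoc_transfer[where X = XL and f = reassoc and mX = mul_L])
  show "veq XR (mul_R y1 y2) (mul_R y1' y2')" if "veq XR y1 y1'" "veq XR y2 y2'" for y1 y1' y2 y2'
    using mul_right_cong that .
  show "veq XR (reassoc x) (reassoc x')" if "veq XL x x'" for x x'
    using slin_reassoc[of sP sA sU] that by (simp add: slin_def)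
  show "\<exists>x. veq XR (reassoc x) y" for y
    using reassoc_unreassoc by blast
qed (rule svs_tens reassoc_mult mul_left_assoc)+

lemma salg_right: "salg XR mul_R [(uP,[(uA,uU)])]"
  unfolding salg_def
proof (intro conjI allI impI)
  show "svs XR" by (rule svs_tens)
  show "veq XR (mul_R x y) (mul_R x' y')" if "veq XR x x'" "veq XR y y'" for x x' y y'
    using mul_right_cong that .
  show "veq XR (mul_R (vadd XR x y) z) (vadd XR (mul_R x z) (mul_R y z))" for x y z
    by (rule veq_tens3_rightI) simp
  show "veq XR (mul_R x (vadd XR y z)) (vadd XR (mul_R x y) (mul_R x z))" for x y z
    by (rule veq_tens3_rightI) simp
  show "veq XR (mul_R (vsc XR c x) y) (vsc XR c (mul_R x y))" for c x y
    apply (rule veq_tens3_rightI)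
    subgoal premises T for T
      by (simp add: trilinear_form_rules[OF T] smash_simps)
    done
  show "veq XR (mul_R x (vsc XR c y)) (vsc XR c (mul_R x y))" for c x y
    apply (rule veq_tens3_rightI)
    subgoal premises T for T
      by (simp add: trilinear_form_rules[OF T] smash_simps)
    done
  show "veq XR (mul_R (mul_R x y) z) (mul_R x (mul_R y z))" for x y z by (rule mul_right_assoc)
  show "veq XR (mul_R [(uP, [(uA, uU)])] x) x" for x
    apply (rule veq_tens3_rightI)
    subgoal premises T for T
      by (simp add: trilinear_form_rules[OF T] smash_simps counit_simps mult.assoc distrib_left)
    done
  show "veq XR (mul_R x [(uP, [(uA, uU)])]) x" for x
    apply (rule veq_tens3_rightI)
    subgoal premises T for T
      by (simp add: trilinear_form_rules[OF T] smash_simps counit_simps mult.assoc distrib_left)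
    done
qed

lemma alg_iso_reassoc: "alg_iso XL XR mul_L [([(uP,uA)],uU)] mul_R [(uP,[(uA,uU)])] reassoc"
  unfolding alg_iso_def
proof (intro conjI allI impI)
  show "salg XL mul_L [([(uP, uA)], uU)]" by (rule salg_left)
  show "salg XR mul_R [(uP, [(uA, uU)])]" by (rule salg_right)
  show "slin XL XR reassoc" by (rule slin_reassoc)
  show "veq XR (reassoc (mul_L x x')) (mul_R (reassoc x) (reassoc x'))" for x x' by (rule reassoc_mult)
  show "veq XR (reassoc [([(uP, uA)], uU)]) [(uP, [(uA, uU)])]" by (simp add: reassoc_def veq_tens_refl)
  show "veq XL x x'" if "veq XR (reassoc x) (reassoc x')" for x x' using reassoc_reflects_veq that .
  show "\<exists>x. veq XR (reassoc x) y" for y using reassoc_unreassoc by blast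
qed

end

theorem proposition3p4:
  fixes H :: "('k::field, 'h::ab_group_add) bialg"
    and sP :: "'k \<Rightarrow> 'p::ab_group_add \<Rightarrow> 'p" and mP :: "'p \<Rightarrow> 'p \<Rightarrow> 'p" and uP :: 'p
    and laP :: "'h \<Rightarrow> 'p \<Rightarrow> 'p" and raP :: "'p \<Rightarrow> 'h \<Rightarrow> 'p"
    and sA :: "'k \<Rightarrow> 'a::ab_group_add \<Rightarrow> 'a" and mA :: "'a \<Rightarrow> 'a \<Rightarrow> 'a" and uA :: 'a
    and laA :: "'h \<Rightarrow> 'a \<Rightarrow> 'a" and coA :: "'a \<Rightarrow> ('h \<times> 'a) list"
    and sU :: "'k \<Rightarrow> 'u::ab_group_add \<Rightarrow> 'u" and mU :: "'u \<Rightarrow> 'u \<Rightarrow> 'u" and uU :: 'u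
    and lamU :: "'u \<Rightarrow> ('h \<times> 'u) list" and rhoU :: "'u \<Rightarrow> ('u \<times> 'h) list"
  assumes "bialgebra H"
    and "vector_space sP" and "bimodalg H (plainvs sP) mP uP laP raP"
    and "vector_space sA" and "ydalg H (plainvs sA) mA uA laA coA"
    and "vector_space sU" and "bicomodalg H (plainvs sU) mU uU lamU rhoU"
  shows "bimodalg H (tens (plainvs sP) (plainvs sA)) (gsm_mul mP mA laP coA) [(uP, uA)]
           (sm_lact H laP laA) (sm_ract raP)
       \<and> bicomodalg H (tens (plainvs sA) (plainvs sU)) (gsm_mul mA mU laA lamU) [(uA, uU)]
           (sm_lco H coA lamU) (sm_rco rhoU)
       \<and> alg_iso (tens (tens (plainvs sP) (plainvs sA)) (plainvs sU))
           (tens (plainvs sP) (tens (plainvs sA) (plainvs sU)))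
           (lr_mul (gsm_mul mP mA laP coA) mU (sm_lact H laP laA) (sm_ract raP) lamU rhoU)
           [([(uP, uA)], uU)]
           (lr_mul mP (gsm_mul mA mU laA lamU) laP raP (sm_lco H coA lamU) (sm_rco rhoU))
           [(uP, [(uA, uU)])]
           reassoc"
proof -
  interpret lr_smash_reassoc H sP mP uP laP raP sA mA uA laA coA sU mU uU lamU rhoU
    unfolding lr_smash_reassoc_def module_smash_def comodule_smash_def
    using assms plain_bimodalgI plain_ydalgI plain_bicomodalgI by blast
  show ?thesis using p1.bimodalg_smash p2.bicomodalg_smash alg_iso_reassoc by blast
qed

end
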